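(* Let $n\ge 4$ and $F=\{5,6,\dots,n\}$. Denote the partial conjugations of $W_n$ by $x_{i,D}$ and those of $W_4$ by $y_{i,D}$. The assignment $\varphi_{5^+}:\mathrm{Out}^0(W_n)\to\mathrm{Out}^0(W_4)$ given on generators by $\varphi_{5^+}(x_{i,D})=\mathrm{id}$ if $i\ge 5$ or $D\subseteq F$ or $D^c\subseteq F$, and $\varphi_{5^+}(x_{i,D})=y_{i,D\setminus F}$ otherwise, defines a surjective homomorphism, and the assignment $\psi_{5^+}(y_{i,D})=x_{i,D}$ defines a homomorphism $\psi_{5^+}:\mathrm{Out}^0(W_4)\to\mathrm{Out}^0(W_n)$ with $\varphi_{5^+}\circ\psi_{5^+}=\mathrm{id}$. In particular $\mathrm{Out}^0(W_n)\cong\ker\varphi_{5^+}\rtimes\mathrm{Out}^0(W_4)$ and $\psi_{5^+}$ embeds $\mathrm{Out}^0(W_4)$ as a subgroup of $\mathrm{Out}^0(W_n)$.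
   Context: $W_n=\langle a_1,\dots,a_n\mid a_i^2=1\rangle$, $[n]=\{1,\dots,n\}$. For $i\in[n]$ and nonempty $D\subseteq[n]\setminus\{i\}$, the partial conjugation $x_{i,D}$ sends $a_j\mapsto a_ia_ja_i$ for $j\in D$ and fixes the other generators; $D^c=[n]\setminus(D\cup\{i\})$. $\mathrm{Out}^0(W_n)=\mathrm{Aut}^0(W_n)/\mathrm{Inn}(W_n)$ where $\mathrm{Aut}^0(W_n)$ consists of automorphisms sending each $a_j$ to a conjugate of itself; in it $x_{i,D}=x_{i,D^c}$. Generators are taken as the $x_{i,D}$ with $D$ nonempty and not containing the minimal element $m$ of $[n]\setminus\{i\}$ (i.e. $D\subseteq[n]\setminus\{i,m\}$). With $\widetilde D=D\cup\{i\}$, $\widetilde{D^c}=D^c\cup\{i\}$, a presentation (Mühlherr) of $\mathrm{Out}^0(W_n)$ on these generators has relations: (R1) $x_{i,D}^2=1$; (R2) $x_{i,D}x_{i,D'}=x_{i,(D\cup D')\setminus(D\cap D')}$; (R3) $[x_{i,D_i},x_{j,D_j}]=1$ whenever $\widetilde{D_i}\cap\widetilde{D_j}=\emptyset$, $\widetilde{D_i^c}\cap\widetilde{D_j}=\emptyset$, or $\widetilde{D_i}\cap\widetilde{D_j^c}=\emptyset$. *)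

theory Defs
  imports "HOL-Algebra.Algebra"
begin

text \<open>The right-angled Coxeter group W_n = < a_1,...,a_n | a_i^2 = 1 >, realised concretely
  by its normal forms: words over {1..n} with no two equal adjacent letters.
  The generator a_j is the one-letter word [j]; the product is concatenation followed
  by free cancellation of adjacent equal letters.\<close>

fun red_cons :: "nat \<Rightarrow> nat list \<Rightarrow> nat list" where
  "red_cons a [] = [a]"
| "red_cons a (b # w) = (if a = b then w else a # b # w)"

definition W :: "nat \<Rightarrow> nat list monoid" where
  "W n = \<lparr>carrier = {w. set w \<subseteq> {1..n} \<and> successively (\<noteq>) w},
          monoid.mult = (\<lambda>u v. foldr red_cons u v),
          one = []\<rparr>"

definition Aut0 :: "nat \<Rightarrow> (nat list \<Rightarrow> nat list) monoid" where
  "Aut0 n = (AutoGroup (W n))\<lparr>carrier :=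
     {f \<in> auto (W n). \<forall>j\<in>{1..n}. \<exists>g\<in>carrier (W n).
        f [j] = g \<otimes>\<^bsub>W n\<^esub> [j] \<otimes>\<^bsub>W n\<^esub> inv\<^bsub>W n\<^esub> g}\<rparr>"

definition conjW :: "nat \<Rightarrow> nat list \<Rightarrow> (nat list \<Rightarrow> nat list)" where
  "conjW n g = (\<lambda>x\<in>carrier (W n). g \<otimes>\<^bsub>W n\<^esub> x \<otimes>\<^bsub>W n\<^esub> inv\<^bsub>W n\<^esub> g)"

definition Inn :: "nat \<Rightarrow> (nat list \<Rightarrow> nat list) set" where
  "Inn n = conjW n ` carrier (W n)"

definition Out0 :: "nat \<Rightarrow> (nat list \<Rightarrow> nat list) set monoid" where
  "Out0 n = Aut0 n Mod Inn n"

definition extW :: "nat \<Rightarrow> (nat \<Rightarrow> nat list) \<Rightarrow> (nat list \<Rightarrow> nat list)" where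
  "extW n s = (\<lambda>w\<in>carrier (W n). foldr (\<lambda>j acc. s j \<otimes>\<^bsub>W n\<^esub> acc) w [])"

definition pconj :: "nat \<Rightarrow> nat \<Rightarrow> nat set \<Rightarrow> (nat list \<Rightarrow> nat list)" where
  "pconj n i D = extW n (\<lambda>j. if j \<in> D then [i] \<otimes>\<^bsub>W n\<^esub> [j] \<otimes>\<^bsub>W n\<^esub> [i] else [j])"

definition Xc :: "nat \<Rightarrow> nat \<Rightarrow> nat set \<Rightarrow> (nat list \<Rightarrow> nat list) set" where
  "Xc n i D = r_coset (Aut0 n) (Inn n) (pconj n i D)"

definition Dc :: "nat \<Rightarrow> nat \<Rightarrow> nat set \<Rightarrow> nat set" where
  "Dc n i D = {1..n} - (D \<union> {i})"

definition gens :: "nat \<Rightarrow> (nat \<times> nat set) set" where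
  "gens n = {(i, D). i \<in> {1..n} \<and> D \<noteq> {} \<and> D \<subseteq> {1..n} - {i, Min ({1..n} - {i})}}"

end

(* The projection W_n -> W_k killing a_(k+1), ..., a_n is compatible with every f in Aut^0(W_n):
   f sends each killed generator to a conjugate of itself, so after projecting, f only depends on
   the projection of its argument.  Hence f |-> proj o f|W_k is a homomorphism
   Aut^0(W_n) -> Aut^0(W_k) mapping inner automorphisms to inner ones, and it induces phi.

   For the section, every outer class of W_k has a representative f fixing a_1.  Extend f to W_n by
   a_j |-> a_1^e a_j a_1^e for j > k, where e is the parity of the letters a_1 in a conjugator of
   f(a_2).  This is multiplicative on the stabiliser of a_1, whose only inner elements are 1 and
   conjugation by a_1, and both extend to inner automorphisms of W_n; so it descends to psi, and
   phi o psi = id because the extension restricts to f.  The remaining claims hold for any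
   retraction of groups.  The argument works for any 2 <= k <= n in place of 4. *)

theory Submission
  imports Defs
begin

lemma (in group) conj_conj:
  assumes "g \<in> carrier G" "g' \<in> carrier G" "x \<in> carrier G"
  shows "g \<otimes> (g' \<otimes> x \<otimes> inv g') \<otimes> inv g = (g \<otimes> g') \<otimes> x \<otimes> inv (g \<otimes> g')"
  using assms by (simp add: m_assoc inv_mult_group)

lemma (in group) inv_mult_cancel [simp]:
  "x \<in> carrier G \<Longrightarrow> y \<in> carrier G \<Longrightarrow> inv x \<otimes> (x \<otimes> y) = y"
  by (simp add: m_assoc[symmetric])

lemma (in group) mult_inv_cancel [simp]:
  "x \<in> carrier G \<Longrightarrow> y \<in> carrier G \<Longrightarrow> x \<otimes> (inv x \<otimes> y) = y"
  by (simp add: m_assoc[symmetric])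

lemma (in group) conj_solve:
  assumes "a \<in> carrier G" "y \<in> carrier G" "x = a \<otimes> y \<otimes> inv a"
  shows "y = inv a \<otimes> x \<otimes> a"
  using assms by (simp add: m_assoc[symmetric]) (simp add: m_assoc)

lemma (in group) conj_involution:
  assumes "x \<in> carrier G" "y \<in> carrier G" "x \<otimes> x = \<one>"
  shows "x \<otimes> (x \<otimes> y \<otimes> x) \<otimes> x = y"
proof -
  have "x \<otimes> (x \<otimes> y \<otimes> x) \<otimes> x = (x \<otimes> x) \<otimes> y \<otimes> (x \<otimes> x)"
    using assms(1,2) by (simp add: m_assoc)
  then show ?thesis using assms by simp
qed

lemma (in group) conj_square_one:
  assumes "x \<in> carrier G" "y \<in> carrier G" "x \<otimes> x = \<one>" "y \<otimes> y = \<one>"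
  shows "(x \<otimes> y \<otimes> x) \<otimes> (x \<otimes> y \<otimes> x) = \<one>"
proof -
  have "(x \<otimes> y \<otimes> x) \<otimes> (x \<otimes> y \<otimes> x) = x \<otimes> (y \<otimes> (x \<otimes> x) \<otimes> y) \<otimes> x"
    using assms(1,2) by (simp add: m_assoc)
  then show ?thesis using assms by simp
qed

lemma (in group) rcos_mult_absorb:
  assumes "subgroup H G" "h \<in> H" "x \<in> carrier G"
  shows "H #> (h \<otimes> x) = H #> x"
proof -
  have "H #> (h \<otimes> x) = (H #> h) #> x"
    using assms subgroup.mem_carrier[OF assms(1,2)] by (simp add: coset_mult_assoc subgroup.subset)
  then show ?thesis using subgroup.rcos_const[OF assms(1) is_group assms(2)] by simp
qed

lemma AutoGroup_mult:
  "f \<in> auto G \<Longrightarrow> h \<in> auto G \<Longrightarrow> f \<otimes>\<^bsub>AutoGroup G\<^esub> h = compose (carrier G) f h"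
  by (simp add: AutoGroup_def BijGroup_def auto_def)

context
  fixes G H :: "('a, 'b) monoid_scheme" and \<phi> \<psi>
  assumes hom_\<phi>: "group_hom G H \<phi>" and hom_\<psi>: "group_hom H G \<psi>"
    and retraction: "\<And>y. y \<in> carrier H \<Longrightarrow> \<phi> (\<psi> y) = y"
begin

lemma retraction_surj: "\<phi> ` carrier G = carrier H"
proof
  show "\<phi> ` carrier G \<subseteq> carrier H" using group_hom.hom_closed[OF hom_\<phi>] by auto
  show "carrier H \<subseteq> \<phi> ` carrier G"
  proof
    fix y assume y: "y \<in> carrier H"
    then have "y = \<phi> (\<psi> y)" using retraction by simp
    then show "y \<in> \<phi> ` carrier G" using group_hom.hom_closed[OF hom_\<psi> y] by blast
  qed
qed

lemma section_inj_on: "inj_on \<psi> (carrier H)"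
  by (rule inj_on_inverseI[of _ \<phi>]) (rule retraction)

lemma kernel_Int_section_image: "kernel G H \<phi> \<inter> \<psi> ` carrier H = {\<one>\<^bsub>G\<^esub>}"
proof
  interpret \<phi>: group_hom G H \<phi> by (rule hom_\<phi>)
  interpret \<psi>: group_hom H G \<psi> by (rule hom_\<psi>)
  show "kernel G H \<phi> \<inter> \<psi> ` carrier H \<subseteq> {\<one>\<^bsub>G\<^esub>}"
  proof
    fix x assume "x \<in> kernel G H \<phi> \<inter> \<psi> ` carrier H"
    then obtain y where y: "y \<in> carrier H" "x = \<psi> y" "\<phi> x = \<one>\<^bsub>H\<^esub>"
      by (auto simp: kernel_def)
    then have "y = \<one>\<^bsub>H\<^esub>" using retraction by simp
    then show "x \<in> {\<one>\<^bsub>G\<^esub>}" using y by simp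
  qed
  have "\<one>\<^bsub>G\<^esub> \<in> \<psi> ` carrier H" using image_eqI[of _ \<psi> "\<one>\<^bsub>H\<^esub>"] by simp
  then show "{\<one>\<^bsub>G\<^esub>} \<subseteq> kernel G H \<phi> \<inter> \<psi> ` carrier H" by (simp add: kernel_def)
qed

lemma kernel_set_mult_section_image: "kernel G H \<phi> <#>\<^bsub>G\<^esub> \<psi> ` carrier H = carrier G"
proof
  interpret \<phi>: group_hom G H \<phi> by (rule hom_\<phi>)
  interpret \<psi>: group_hom H G \<psi> by (rule hom_\<psi>)
  show "kernel G H \<phi> <#>\<^bsub>G\<^esub> \<psi> ` carrier H \<subseteq> carrier G"
    by (auto simp: set_mult_def kernel_def)
  show "carrier G \<subseteq> kernel G H \<phi> <#>\<^bsub>G\<^esub> \<psi> ` carrier H"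
  proof
    fix x assume x: "x \<in> carrier G"
    define s where "s = \<psi> (\<phi> x)"
    have s_img: "s \<in> \<psi> ` carrier H" using x by (simp add: s_def)
    have s: "s \<in> carrier G" "\<phi> s = \<phi> x" using x retraction by (simp_all add: s_def)
    have kernel: "x \<otimes>\<^bsub>G\<^esub> inv\<^bsub>G\<^esub> s \<in> kernel G H \<phi>" using x s by (simp add: kernel_def)
    have "x = (x \<otimes>\<^bsub>G\<^esub> inv\<^bsub>G\<^esub> s) \<otimes>\<^bsub>G\<^esub> s" using x s by (simp add: \<phi>.G.m_assoc)
    then show "x \<in> kernel G H \<phi> <#>\<^bsub>G\<^esub> \<psi> ` carrier H"
      unfolding set_mult_def by (intro UN_I[OF kernel] UN_I[OF s_img]) simp
  qed
qed

lemma section_iso_image: "\<psi> \<in> iso H (G\<lparr>carrier := \<psi> ` carrier H\<rparr>)"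
proof -
  have "\<psi> \<in> hom H (G\<lparr>carrier := \<psi> ` carrier H\<rparr>)"
    using group_hom.hom_mult[OF hom_\<psi>] by (intro homI) auto
  then show ?thesis using section_inj_on by (simp add: iso_def bij_betw_def)
qed

end

section \<open>The group $W_n$\<close>

abbreviation wprod :: "nat list \<Rightarrow> nat list \<Rightarrow> nat list" where
  "wprod u v \<equiv> foldr red_cons u v"

abbreviation reduced :: "nat list \<Rightarrow> bool" where
  "reduced w \<equiv> successively (\<noteq>) w"

lemma reduced_red_cons: "reduced w \<Longrightarrow> reduced (red_cons a w)"
  by (cases w) (auto simp: successively_Cons)

lemma set_red_cons_subset: "set (red_cons a w) \<subseteq> insert a (set w)"
  by (cases w) auto

lemma reduced_wprod: "reduced v \<Longrightarrow> reduced (wprod u v)"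
  by (induction u) (auto intro: reduced_red_cons)

lemma set_wprod_subset: "set (wprod u v) \<subseteq> set u \<union> set v"
  by (induction u) (use set_red_cons_subset in fastforce)+

lemma red_cons_red_cons: "reduced w \<Longrightarrow> red_cons a (red_cons a w) = w"
  by (cases w rule: remdups_adj.cases) (auto simp: successively_Cons)

lemma wprod_Nil_right: "reduced v \<Longrightarrow> wprod v [] = v"
  by (induction v rule: induct_list012) (auto simp: successively_Cons)

lemma red_cons_wprod:
  "reduced r \<Longrightarrow> reduced w \<Longrightarrow> red_cons a (wprod r w) = wprod (red_cons a r) w"
  by (cases r) (auto simp: successively_Cons red_cons_red_cons reduced_wprod)

lemma wprod_normalise_left: "reduced w \<Longrightarrow> wprod (wprod u []) w = wprod u w"
proof (induction u)
  case (Cons a u)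
  have "wprod (wprod (a # u) []) w = red_cons a (wprod (wprod u []) w)"
    using Cons.prems by (simp add: red_cons_wprod reduced_wprod)
  then show ?case using Cons by simp
qed simp

lemma wprod_assoc: "reduced v \<Longrightarrow> reduced w \<Longrightarrow> wprod (wprod u v) w = wprod u (wprod v w)"
proof -
  assume v: "reduced v" and w: "reduced w"
  have "wprod u v = wprod (u @ v) []" using wprod_Nil_right[OF v] by simp
  then show ?thesis using wprod_normalise_left[OF w, of "u @ v"] by simp
qed

lemma wprod_rev_cancel: "wprod (rev u) (wprod u []) = []"
proof (induction u)
  case (Cons a u)
  then show ?case by (simp add: foldr_append red_cons_red_cons reduced_wprod)
qed simp

text \<open>The simplifier rewrites \<open>reduced (rev w)\<close> into the left-hand side via
  \<open>successively_rev\<close>.\<close>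

lemma successively_neq_commute [simp]: "successively (\<lambda>x y. y \<noteq> x) w = reduced w"
  by (induction w rule: induct_list012) auto

lemma W_carrier: "carrier (W n) = {w. set w \<subseteq> {1..n} \<and> reduced w}"
  by (simp add: W_def)

lemma W_mult: "x \<otimes>\<^bsub>W n\<^esub> y = wprod x y"
  by (simp add: W_def)

lemma W_one: "\<one>\<^bsub>W n\<^esub> = []"
  by (simp add: W_def)

lemma group_W: "group (W n)"
proof (rule groupI)
  fix x y assume "x \<in> carrier (W n)" "y \<in> carrier (W n)"
  then show "x \<otimes>\<^bsub>W n\<^esub> y \<in> carrier (W n)"
    using set_wprod_subset[of x y] by (auto simp: W_carrier W_mult intro: reduced_wprod)
next
  fix x assume x: "x \<in> carrier (W n)"
  then show "\<exists>y\<in>carrier (W n). y \<otimes>\<^bsub>W n\<^esub> x = \<one>\<^bsub>W n\<^esub>"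
    using wprod_rev_cancel[of x] wprod_Nil_right[of x]
    by (intro bexI[of _ "rev x"]) (auto simp: W_carrier W_mult W_one)
qed (auto simp: W_carrier W_mult W_one wprod_assoc)

lemma W_inv: "x \<in> carrier (W n) \<Longrightarrow> inv\<^bsub>W n\<^esub> x = rev x"
  using wprod_rev_cancel[of x] wprod_Nil_right[of x]
  by (intro group.inv_equality[OF group_W]) (auto simp: W_carrier W_mult W_one)

lemma W_gen_in_carrier: "j \<in> {1..n} \<Longrightarrow> [j] \<in> carrier (W n)"
  by (simp add: W_carrier)

lemma W_gen_square: "[j] \<otimes>\<^bsub>W n\<^esub> [j] = \<one>\<^bsub>W n\<^esub>"
  by (simp add: W_mult W_one)

lemma W_Cons:
  "j # w \<in> carrier (W n) \<Longrightarrow> j # w = [j] \<otimes>\<^bsub>W n\<^esub> w \<and> w \<in> carrier (W n) \<and> j \<in> {1..n}"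
  by (cases w) (auto simp: W_carrier W_mult successively_Cons)

lemma W_carrier_mono: "k \<le> n \<Longrightarrow> carrier (W k) \<subseteq> carrier (W n)"
  by (auto simp: W_carrier)

section \<open>Homomorphisms defined on the generators\<close>

definition gen_prod :: "('b, 'c) monoid_scheme \<Rightarrow> (nat \<Rightarrow> 'b) \<Rightarrow> nat list \<Rightarrow> 'b" where
  "gen_prod G s w = foldr (\<lambda>j acc. s j \<otimes>\<^bsub>G\<^esub> acc) w \<one>\<^bsub>G\<^esub>"

lemma gen_prod_Nil [simp]: "gen_prod G s [] = \<one>\<^bsub>G\<^esub>"
  by (simp add: gen_prod_def)

lemma gen_prod_Cons [simp]: "gen_prod G s (a # w) = s a \<otimes>\<^bsub>G\<^esub> gen_prod G s w"
  by (simp add: gen_prod_def)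

lemma gen_prod_cong: "(\<And>j. j \<in> set w \<Longrightarrow> s j = s' j) \<Longrightarrow> gen_prod G s w = gen_prod G s' w"
  by (induction w) auto

lemma extW_eq: "extW n s = (\<lambda>w\<in>carrier (W n). gen_prod (W n) s w)"
  by (simp add: extW_def gen_prod_def W_one)

context group
begin

lemma gen_prod_closed: "(\<And>j. j \<in> set w \<Longrightarrow> s j \<in> carrier G) \<Longrightarrow> gen_prod G s w \<in> carrier G"
  by (induction w) auto

lemma gen_prod_red_cons:
  assumes "\<And>j. j \<in> insert a (set w) \<Longrightarrow> s j \<in> carrier G" and "s a \<otimes> s a = \<one>"
  shows "gen_prod G s (red_cons a w) = s a \<otimes> gen_prod G s w"
proof (cases w)
  case (Cons b w')
  have "s a \<otimes> (s a \<otimes> gen_prod G s w') = gen_prod G s w'"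
    using assms Cons by (simp add: m_assoc[symmetric] gen_prod_closed)
  then show ?thesis using Cons by auto
qed simp

lemma gen_prod_wprod:
  assumes "\<And>j. j \<in> set u \<union> set v \<Longrightarrow> s j \<in> carrier G \<and> s j \<otimes> s j = \<one>"
  shows "gen_prod G s (wprod u v) = gen_prod G s u \<otimes> gen_prod G s v"
  using assms
proof (induction u)
  case (Cons a u)
  have "gen_prod G s (wprod (a # u) v) = s a \<otimes> gen_prod G s (wprod u v)"
    using Cons.prems set_wprod_subset[of u v] by (auto intro!: gen_prod_red_cons)
  then show ?case using Cons by (simp add: m_assoc gen_prod_closed)
qed (simp add: gen_prod_closed)

lemma gen_prod_hom:
  assumes "\<And>j. j \<in> {1..n} \<Longrightarrow> s j \<in> carrier G \<and> s j \<otimes> s j = \<one>"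
  shows "(\<lambda>w\<in>carrier (W n). gen_prod G s w) \<in> hom (W n) G"
proof (rule homI)
  fix x y assume xy: "x \<in> carrier (W n)" "y \<in> carrier (W n)"
  then have "x \<otimes>\<^bsub>W n\<^esub> y \<in> carrier (W n)" by (simp add: group.is_monoid group_W monoid.m_closed)
  then show "(\<lambda>w\<in>carrier (W n). gen_prod G s w) (x \<otimes>\<^bsub>W n\<^esub> y) =
       (\<lambda>w\<in>carrier (W n). gen_prod G s w) x \<otimes> (\<lambda>w\<in>carrier (W n). gen_prod G s w) y"
    using xy assms by (auto simp: W_mult W_carrier intro!: gen_prod_wprod)
qed (use assms in \<open>auto simp: W_carrier intro!: gen_prod_closed\<close>)

lemma gen_prod_hom_gen:
  assumes "\<And>j. j \<in> {1..n} \<Longrightarrow> s j \<in> carrier G \<and> s j \<otimes> s j = \<one>" and "j \<in> {1..n}"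
  shows "(\<lambda>w\<in>carrier (W n). gen_prod G s w) [j] = s j"
  using assms by (simp add: W_gen_in_carrier)

end

lemma hom_eq_gen_prod:
  assumes "group G" "h \<in> hom (W n) G" "w \<in> carrier (W n)"
  shows "h w = gen_prod G (\<lambda>j. h [j]) w"
  using assms(3)
proof (induction w)
  case Nil then show ?case
    using assms group_W hom_one[of h "W n" G] by (simp add: W_one)
next
  case (Cons a w)
  then have "a # w = [a] \<otimes>\<^bsub>W n\<^esub> w" "w \<in> carrier (W n)" "a \<in> {1..n}"
    using W_Cons by blast+
  then show ?case
    using Cons assms(2) W_gen_in_carrier by (metis gen_prod_Cons hom_mult)
qed

lemma W_hom_eqI:
  assumes "group G" "h \<in> hom (W n) G" "h' \<in> hom (W n) G"
    and "\<And>j. j \<in> {1..n} \<Longrightarrow> h [j] = h' [j]" and "w \<in> carrier (W n)"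
  shows "h w = h' w"
proof -
  have "gen_prod G (\<lambda>j. h [j]) w = gen_prod G (\<lambda>j. h' [j]) w"
    using assms(4,5) by (intro gen_prod_cong) (auto simp: W_carrier)
  then show ?thesis using hom_eq_gen_prod assms by metis
qed

lemma W_endo_eqI:
  assumes "f \<in> hom (W m) (W m)" "g \<in> hom (W m) (W m)"
    and "f \<in> extensional (carrier (W m))" "g \<in> extensional (carrier (W m))"
    and "\<And>j. j \<in> {1..m} \<Longrightarrow> f [j] = g [j]"
  shows "f = g"
  using W_hom_eqI[OF group_W assms(1,2,5)] assms(3,4) by (intro extensionalityI) auto

lemma group_hom_W: "h \<in> hom (W n) (W m) \<Longrightarrow> group_hom (W n) (W m) h"
  by (simp add: group_W group_hom.intro group_hom_axioms.intro)

lemma hom_W_inv: "f \<in> hom (W n) (W m) \<Longrightarrow> x \<in> carrier (W n) \<Longrightarrow> f (inv\<^bsub>W n\<^esub> x) = inv\<^bsub>W m\<^esub> (f x)"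
  by (rule group_hom.hom_inv[OF group_hom_W])

lemma hom_W_Nil: "f \<in> hom (W n) (W m) \<Longrightarrow> f [] = []"
  using group_hom.hom_one[OF group_hom_W] by (fastforce simp: W_one)

lemma id_hom_W: "(\<lambda>x. x) \<in> hom (W n) (W n)"
  by (rule homI) auto

lemma restrict_id_hom_W: "(\<lambda>x\<in>carrier (W n). x) \<in> hom (W n) (W n)"
  by (rule homI) (auto simp: group.is_monoid group_W monoid.m_closed)

lemma hom_W_restrict_source: "h \<in> hom (W n) G \<Longrightarrow> k \<le> n \<Longrightarrow> h \<in> hom (W k) G"
  using W_carrier_mono[of k n] by (auto simp: hom_def W_mult Pi_iff)

lemma hom_W_extend_target: "h \<in> hom G (W k) \<Longrightarrow> k \<le> n \<Longrightarrow> h \<in> hom G (W n)"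
  using W_carrier_mono[of k n] by (auto simp: hom_def W_mult Pi_iff)

section \<open>$\mathrm{Aut}^0(W_n)$ and $\mathrm{Out}^0(W_n)$\<close>

definition Aut0_set :: "nat \<Rightarrow> (nat list \<Rightarrow> nat list) set" where
  "Aut0_set n = {f \<in> auto (W n). \<forall>j\<in>{1..n}. \<exists>g\<in>carrier (W n).
        f [j] = g \<otimes>\<^bsub>W n\<^esub> [j] \<otimes>\<^bsub>W n\<^esub> inv\<^bsub>W n\<^esub> g}"

lemma Aut0_carrier: "carrier (Aut0 n) = Aut0_set n"
  by (simp add: Aut0_def Aut0_set_def)

lemma Aut0_setI:
  assumes "f \<in> auto (W n)"
    and "\<And>j. j \<in> {1..n} \<Longrightarrow> \<exists>g\<in>carrier (W n). f [j] = g \<otimes>\<^bsub>W n\<^esub> [j] \<otimes>\<^bsub>W n\<^esub> inv\<^bsub>W n\<^esub> g"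
  shows "f \<in> Aut0_set n"
  using assms by (simp add: Aut0_set_def)

lemma Aut0_setE:
  assumes "f \<in> Aut0_set n" "j \<in> {1..n}"
  obtains g where "g \<in> carrier (W n)" "f [j] = g \<otimes>\<^bsub>W n\<^esub> [j] \<otimes>\<^bsub>W n\<^esub> inv\<^bsub>W n\<^esub> g"
  using assms unfolding Aut0_set_def by blast

lemma Aut0_set_hom: "f \<in> Aut0_set n \<Longrightarrow> f \<in> hom (W n) (W n)"
  by (simp add: Aut0_set_def auto_def)

lemma Aut0_set_extensional: "f \<in> Aut0_set n \<Longrightarrow> f \<in> extensional (carrier (W n))"
  by (auto simp: Aut0_set_def auto_def Bij_def)

lemma Aut0_mult:
  "f \<in> Aut0_set n \<Longrightarrow> h \<in> Aut0_set n \<Longrightarrow> f \<otimes>\<^bsub>Aut0 n\<^esub> h = compose (carrier (W n)) f h"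
  by (simp add: Aut0_def AutoGroup_mult Aut0_set_def)

lemma Aut0_one: "\<one>\<^bsub>Aut0 n\<^esub> = (\<lambda>x\<in>carrier (W n). x)"
  by (simp add: Aut0_def AutoGroup_def BijGroup_def)

lemma auto_W_intro:
  assumes "f \<in> hom (W n) (W n)" "f \<in> extensional (carrier (W n))"
    and "h \<in> carrier (W n) \<rightarrow> carrier (W n)"
    and "\<And>x. x \<in> carrier (W n) \<Longrightarrow> h (f x) = x" "\<And>x. x \<in> carrier (W n) \<Longrightarrow> f (h x) = x"
  shows "f \<in> auto (W n)"
proof -
  have "bij_betw f (carrier (W n)) (carrier (W n))"
    using assms by (intro bij_betw_byWitness[of _ h]) (auto simp: hom_def)
  then show ?thesis using assms by (simp add: auto_def Bij_def)
qed

lemma conj_gen_image: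
  assumes f: "f \<in> hom (W n) (W n)" and j: "j \<in> {1..n}"
    and h: "\<exists>g\<in>carrier (W n). h [j] = g \<otimes>\<^bsub>W n\<^esub> [j] \<otimes>\<^bsub>W n\<^esub> inv\<^bsub>W n\<^esub> g"
    and f_conj: "\<exists>g\<in>carrier (W n). f [j] = g \<otimes>\<^bsub>W n\<^esub> [j] \<otimes>\<^bsub>W n\<^esub> inv\<^bsub>W n\<^esub> g"
  shows "\<exists>g\<in>carrier (W n). f (h [j]) = g \<otimes>\<^bsub>W n\<^esub> [j] \<otimes>\<^bsub>W n\<^esub> inv\<^bsub>W n\<^esub> g"
proof -
  interpret Wn: group "W n" by (rule group_W)
  obtain g g' where g: "g \<in> carrier (W n)" "h [j] = g \<otimes>\<^bsub>W n\<^esub> [j] \<otimes>\<^bsub>W n\<^esub> inv\<^bsub>W n\<^esub> g"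
    and g': "g' \<in> carrier (W n)" "f [j] = g' \<otimes>\<^bsub>W n\<^esub> [j] \<otimes>\<^bsub>W n\<^esub> inv\<^bsub>W n\<^esub> g'"
    using h f_conj by blast
  have fg: "f g \<in> carrier (W n)" using f g by (simp add: hom_in_carrier)
  have "f (h [j]) = f g \<otimes>\<^bsub>W n\<^esub> f [j] \<otimes>\<^bsub>W n\<^esub> inv\<^bsub>W n\<^esub> (f g)"
    using g j f by (simp add: W_gen_in_carrier hom_mult hom_W_inv)
  also have "\<dots> = (f g \<otimes>\<^bsub>W n\<^esub> g') \<otimes>\<^bsub>W n\<^esub> [j] \<otimes>\<^bsub>W n\<^esub> inv\<^bsub>W n\<^esub> (f g \<otimes>\<^bsub>W n\<^esub> g')"
    using g' fg j by (simp add: Wn.conj_conj W_gen_in_carrier)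
  finally show ?thesis using fg g' by blast
qed

lemma conj_gen_preimage:
  assumes h: "h \<in> hom (W n) (W n)" and j: "j \<in> {1..n}"
    and g: "g \<in> carrier (W n)" "h (g \<otimes>\<^bsub>W n\<^esub> [j] \<otimes>\<^bsub>W n\<^esub> inv\<^bsub>W n\<^esub> g) = [j]"
  shows "\<exists>g'\<in>carrier (W n). h [j] = g' \<otimes>\<^bsub>W n\<^esub> [j] \<otimes>\<^bsub>W n\<^esub> inv\<^bsub>W n\<^esub> g'"
proof -
  interpret Wn: group "W n" by (rule group_W)
  have hg: "h g \<in> carrier (W n)" "h [j] \<in> carrier (W n)"
    using h g j by (auto simp: W_gen_in_carrier hom_in_carrier)
  have "[j] = h g \<otimes>\<^bsub>W n\<^esub> h [j] \<otimes>\<^bsub>W n\<^esub> inv\<^bsub>W n\<^esub> (h g)"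
    using g j h by (simp add: W_gen_in_carrier hom_mult hom_W_inv)
  then have "h [j] = inv\<^bsub>W n\<^esub> (h g) \<otimes>\<^bsub>W n\<^esub> [j] \<otimes>\<^bsub>W n\<^esub> inv\<^bsub>W n\<^esub> (inv\<^bsub>W n\<^esub> (h g))"
    using Wn.conj_solve[OF hg] hg by simp
  then show ?thesis using hg by (metis Wn.inv_closed)
qed

lemma subgroup_Aut0_set: "subgroup (Aut0_set n) (AutoGroup (W n))"
proof -
  interpret Wn: group "W n" by (rule group_W)
  interpret AG: group "AutoGroup (W n)" by (rule Wn.AutoGroup)
  have AG_carrier: "carrier (AutoGroup (W n)) = auto (W n)" by (simp add: AutoGroup_def)
  show ?thesis
  proof (rule AG.subgroupI)
    show "Aut0_set n \<subseteq> carrier (AutoGroup (W n))" by (auto simp: Aut0_set_def AG_carrier)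
    have "(\<lambda>x\<in>carrier (W n). x) \<in> Aut0_set n"
      using Wn.id_in_auto
      by (intro Aut0_setI) (auto intro!: bexI[of _ "\<one>\<^bsub>W n\<^esub>"] simp: W_gen_in_carrier)
    then show "Aut0_set n \<noteq> {}" by blast
  next
    fix f assume f: "f \<in> Aut0_set n"
    define h where "h = inv\<^bsub>AutoGroup (W n)\<^esub> f"
    have fa: "f \<in> auto (W n)" using f by (simp add: Aut0_set_def)
    then have ha: "h \<in> auto (W n)" unfolding h_def using AG.inv_closed AG_carrier by auto
    have "h \<otimes>\<^bsub>AutoGroup (W n)\<^esub> f = \<one>\<^bsub>AutoGroup (W n)\<^esub>" unfolding h_def using fa AG_carrier by simp
    then have "compose (carrier (W n)) h f = (\<lambda>x\<in>carrier (W n). x)"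
      using fa ha by (simp add: AutoGroup_mult AutoGroup_def BijGroup_def auto_def)
    then have hf: "\<And>x. x \<in> carrier (W n) \<Longrightarrow> h (f x) = x"
      by (metis compose_eq restrict_apply')
    have hh: "h \<in> hom (W n) (W n)" using ha by (simp add: auto_def)
    have "\<exists>g\<in>carrier (W n). h [j] = g \<otimes>\<^bsub>W n\<^esub> [j] \<otimes>\<^bsub>W n\<^esub> inv\<^bsub>W n\<^esub> g" if j: "j \<in> {1..n}" for j
    proof -
      obtain g where g: "g \<in> carrier (W n)" "f [j] = g \<otimes>\<^bsub>W n\<^esub> [j] \<otimes>\<^bsub>W n\<^esub> inv\<^bsub>W n\<^esub> g"
        using f j by (rule Aut0_setE)
      then show ?thesis using hf[of "[j]"] j by (intro conj_gen_preimage[OF hh j g(1)]) (simp add: W_gen_in_carrier)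
    qed
    then show "inv\<^bsub>AutoGroup (W n)\<^esub> f \<in> Aut0_set n" using ha unfolding h_def by (simp add: Aut0_set_def)
  next
    fix f h assume f: "f \<in> Aut0_set n" and h: "h \<in> Aut0_set n"
    have fa: "f \<in> auto (W n)" and ha: "h \<in> auto (W n)" using f h by (auto simp: Aut0_set_def)
    have "compose (carrier (W n)) f h \<in> auto (W n)"
      using AG.m_closed[of f h] fa ha AG_carrier by (simp add: AutoGroup_mult)
    moreover have "\<exists>g\<in>carrier (W n). compose (carrier (W n)) f h [j] = g \<otimes>\<^bsub>W n\<^esub> [j] \<otimes>\<^bsub>W n\<^esub> inv\<^bsub>W n\<^esub> g"
      if j: "j \<in> {1..n}" for j
      using conj_gen_image[OF Aut0_set_hom[OF f] j] f h j
      by (simp add: compose_def W_gen_in_carrier Aut0_set_def)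
    ultimately show "f \<otimes>\<^bsub>AutoGroup (W n)\<^esub> h \<in> Aut0_set n"
      using fa ha by (simp add: Aut0_set_def AutoGroup_mult)
  qed
qed

lemma group_Aut0: "group (Aut0 n)"
  using subgroup.subgroup_is_group[OF subgroup_Aut0_set group.AutoGroup[OF group_W]]
  by (simp add: Aut0_def Aut0_set_def)

lemma Aut0_inv_apply:
  assumes "f \<in> Aut0_set n" "x \<in> carrier (W n)"
  shows "f ((inv\<^bsub>Aut0 n\<^esub> f) x) = x" "(inv\<^bsub>Aut0 n\<^esub> f) (f x) = x"
proof -
  interpret A: group "Aut0 n" by (rule group_Aut0)
  have fi: "inv\<^bsub>Aut0 n\<^esub> f \<in> Aut0_set n" using assms A.inv_closed Aut0_carrier by auto
  have "f \<otimes>\<^bsub>Aut0 n\<^esub> inv\<^bsub>Aut0 n\<^esub> f = \<one>\<^bsub>Aut0 n\<^esub>" "inv\<^bsub>Aut0 n\<^esub> f \<otimes>\<^bsub>Aut0 n\<^esub> f = \<one>\<^bsub>Aut0 n\<^esub>"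
    using assms Aut0_carrier by simp_all
  then show "f ((inv\<^bsub>Aut0 n\<^esub> f) x) = x" "(inv\<^bsub>Aut0 n\<^esub> f) (f x) = x"
    using assms fi by (auto simp: Aut0_mult Aut0_one compose_def dest!: fun_cong[of _ _ x])
qed

lemma conjW_apply: "x \<in> carrier (W n) \<Longrightarrow> conjW n g x = g \<otimes>\<^bsub>W n\<^esub> x \<otimes>\<^bsub>W n\<^esub> inv\<^bsub>W n\<^esub> g"
  by (simp add: conjW_def)

lemma conjW_hom:
  assumes "g \<in> carrier (W n)"
  shows "conjW n g \<in> hom (W n) (W n)"
proof -
  interpret Wn: group "W n" by (rule group_W)
  show ?thesis by (rule homI) (use assms in \<open>auto simp: conjW_apply Wn.m_assoc\<close>)
qed

lemma conjW_in_Aut0_set: "g \<in> carrier (W n) \<Longrightarrow> conjW n g \<in> Aut0_set n"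
proof -
  interpret Wn: group "W n" by (rule group_W)
  assume g: "g \<in> carrier (W n)"
  have "conjW n g \<in> auto (W n)"
  proof (rule auto_W_intro[OF conjW_hom[OF g], of "conjW n (inv\<^bsub>W n\<^esub> g)"])
    show "conjW n g \<in> extensional (carrier (W n))" by (simp add: conjW_def)
  qed (use g in \<open>auto simp: conjW_apply Wn.m_assoc\<close>)
  then show ?thesis
    using g by (auto intro!: Aut0_setI simp: conjW_apply W_gen_in_carrier)
qed

lemma Inn_subset_Aut0_set: "Inn n \<subseteq> Aut0_set n"
  unfolding Inn_def using conjW_in_Aut0_set by auto

lemma conjW_mult:
  assumes "g \<in> carrier (W n)" "h \<in> carrier (W n)"
  shows "conjW n g \<otimes>\<^bsub>Aut0 n\<^esub> conjW n h = conjW n (g \<otimes>\<^bsub>W n\<^esub> h)"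
proof -
  interpret Wn: group "W n" by (rule group_W)
  have "compose (carrier (W n)) (conjW n g) (conjW n h) = conjW n (g \<otimes>\<^bsub>W n\<^esub> h)"
    unfolding compose_def conjW_def[of n "g \<otimes>\<^bsub>W n\<^esub> h"]
    by (rule restrict_ext) (use assms in \<open>simp add: conjW_apply Wn.conj_conj\<close>)
  then show ?thesis using assms by (simp add: Aut0_mult conjW_in_Aut0_set)
qed

lemma conjW_one: "conjW n \<one>\<^bsub>W n\<^esub> = \<one>\<^bsub>Aut0 n\<^esub>"
proof -
  interpret Wn: group "W n" by (rule group_W)
  show ?thesis by (auto simp: Aut0_one conjW_def intro!: restrict_ext)
qed

lemma subgroup_Inn: "subgroup (Inn n) (Aut0 n)"
proof -
  interpret Wn: group "W n" by (rule group_W)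
  interpret A: group "Aut0 n" by (rule group_Aut0)
  have inv: "inv\<^bsub>Aut0 n\<^esub> (conjW n g) = conjW n (inv\<^bsub>W n\<^esub> g)" if "g \<in> carrier (W n)" for g
    using that by (intro A.inv_equality) (auto simp: conjW_mult conjW_one conjW_in_Aut0_set Aut0_carrier)
  show ?thesis
  proof (rule A.subgroupI)
    show "Inn n \<subseteq> carrier (Aut0 n)" using Inn_subset_Aut0_set Aut0_carrier by auto
  qed (auto simp: Inn_def inv conjW_mult)
qed

text \<open>Inner automorphisms form a normal subgroup: $f \circ c_g \circ f^{-1} = c_{f(g)}$.\<close>

lemma normal_Inn: "Inn n \<lhd> Aut0 n"
proof -
  interpret Wn: group "W n" by (rule group_W)
  interpret A: group "Aut0 n" by (rule group_Aut0)
  show ?thesis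
  proof (simp only: A.normal_inv_iff, intro conjI ballI)
    show "subgroup (Inn n) (Aut0 n)" by (rule subgroup_Inn)
    fix f c assume f: "f \<in> carrier (Aut0 n)" and c: "c \<in> Inn n"
    then obtain g where g: "g \<in> carrier (W n)" "c = conjW n g" unfolding Inn_def by auto
    define y where "y = inv\<^bsub>Aut0 n\<^esub> f"
    have fA: "f \<in> Aut0_set n" and yA: "y \<in> Aut0_set n"
      using f Aut0_carrier y_def A.inv_closed by auto
    have cA: "c \<in> Aut0_set n" using g conjW_in_Aut0_set by auto
    have fc: "f \<otimes>\<^bsub>Aut0 n\<^esub> c \<in> Aut0_set n" using fA cA Aut0_carrier A.m_closed by metis
    have fg: "f g \<in> carrier (W n)" using Aut0_set_hom[OF fA] g by (simp add: hom_in_carrier)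
    have "compose (carrier (W n)) (compose (carrier (W n)) f c) y = conjW n (f g)"
      unfolding compose_def[of _ _ y] conjW_def[of n "f g"]
    proof (rule restrict_ext)
      fix x assume x: "x \<in> carrier (W n)"
      have yx: "y x \<in> carrier (W n)" using Aut0_set_hom[OF yA] x by (simp add: hom_in_carrier)
      have "f (g \<otimes>\<^bsub>W n\<^esub> y x \<otimes>\<^bsub>W n\<^esub> inv\<^bsub>W n\<^esub> g) = f g \<otimes>\<^bsub>W n\<^esub> f (y x) \<otimes>\<^bsub>W n\<^esub> inv\<^bsub>W n\<^esub> (f g)"
        using g yx Aut0_set_hom[OF fA] by (simp add: hom_mult hom_W_inv)
      also have "f (y x) = x" using Aut0_inv_apply(1)[OF fA x] y_def by simp
      finally show "compose (carrier (W n)) f c (y x) = f g \<otimes>\<^bsub>W n\<^esub> x \<otimes>\<^bsub>W n\<^esub> inv\<^bsub>W n\<^esub> (f g)"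
        using x yx g by (simp add: compose_def conjW_apply)
    qed
    then have "f \<otimes>\<^bsub>Aut0 n\<^esub> c \<otimes>\<^bsub>Aut0 n\<^esub> y = conjW n (f g)"
      using fA cA yA fc by (simp add: Aut0_mult)
    then show "f \<otimes>\<^bsub>Aut0 n\<^esub> c \<otimes>\<^bsub>Aut0 n\<^esub> inv\<^bsub>Aut0 n\<^esub> f \<in> Inn n"
      using fg y_def unfolding Inn_def by auto
  qed
qed

lemma group_Out0: "group (Out0 n)"
  unfolding Out0_def by (rule normal.factorgroup_is_group[OF normal_Inn])

lemma Inn_coset_eq_one: "c \<in> Inn n \<Longrightarrow> r_coset (Aut0 n) (Inn n) c = \<one>\<^bsub>Out0 n\<^esub>"
  by (simp add: Out0_def subgroup.rcos_const[OF subgroup_Inn group_Aut0])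

lemma Out0_carrier: "carrier (Out0 n) = r_coset (Aut0 n) (Inn n) ` Aut0_set n"
  by (auto simp: Out0_def FactGroup_def RCOSETS_def Aut0_carrier)

lemma Out0_mult:
  "f \<in> Aut0_set n \<Longrightarrow> h \<in> Aut0_set n \<Longrightarrow>
   r_coset (Aut0 n) (Inn n) f \<otimes>\<^bsub>Out0 n\<^esub> r_coset (Aut0 n) (Inn n) h
     = r_coset (Aut0 n) (Inn n) (f \<otimes>\<^bsub>Aut0 n\<^esub> h)"
  using normal.rcos_sum[OF normal_Inn] by (simp add: Out0_def Aut0_carrier)

section \<open>Partial conjugations\<close>

definition pconj_img :: "nat \<Rightarrow> nat \<Rightarrow> nat set \<Rightarrow> nat \<Rightarrow> nat list" where
  "pconj_img n i D j = (if j \<in> D then [i] \<otimes>\<^bsub>W n\<^esub> [j] \<otimes>\<^bsub>W n\<^esub> [i] else [j])"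

lemma pconj_eq: "pconj n i D = (\<lambda>w\<in>carrier (W n). gen_prod (W n) (pconj_img n i D) w)"
  by (simp add: pconj_def pconj_img_def[abs_def] extW_eq)

context
  fixes n i :: nat and D :: "nat set"
  assumes i: "i \<in> {1..n}" and D: "D \<subseteq> {1..n}" "i \<notin> D"
begin

lemma pconj_img_involution:
  assumes j: "j \<in> {1..n}"
  shows "pconj_img n i D j \<in> carrier (W n) \<and> pconj_img n i D j \<otimes>\<^bsub>W n\<^esub> pconj_img n i D j = \<one>\<^bsub>W n\<^esub>"
proof -
  interpret Wn: group "W n" by (rule group_W)
  have gi: "[i] \<in> carrier (W n)" and gj: "[j] \<in> carrier (W n)" using i j by (auto simp: W_gen_in_carrier)
  show ?thesis
    using Wn.conj_square_one[OF gi gj W_gen_square W_gen_square] gi gj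
    by (simp add: pconj_img_def W_gen_square)
qed

lemma pconj_hom: "pconj n i D \<in> hom (W n) (W n)"
  unfolding pconj_eq by (rule group.gen_prod_hom[OF group_W pconj_img_involution])

lemma pconj_gen: "j \<in> {1..n} \<Longrightarrow> pconj n i D [j] = pconj_img n i D j"
  unfolding pconj_eq by (rule group.gen_prod_hom_gen[OF group_W pconj_img_involution])

lemma pconj_pconj: "x \<in> carrier (W n) \<Longrightarrow> pconj n i D (pconj n i D x) = x"
proof (rule W_hom_eqI[OF group_W hom_compose[OF pconj_hom pconj_hom, unfolded o_def] id_hom_W])
  interpret Wn: group "W n" by (rule group_W)
  fix j assume j: "j \<in> {1..n}"
  have gi: "[i] \<in> carrier (W n)" and gj: "[j] \<in> carrier (W n)" using i j W_gen_in_carrier by auto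
  show "pconj n i D (pconj n i D [j]) = [j]"
    using j i gi gj
    by (simp add: pconj_gen pconj_img_def hom_mult[OF pconj_hom] Wn.conj_involution W_gen_square)
qed

lemma pconj_in_Aut0_set: "pconj n i D \<in> Aut0_set n"
proof (rule Aut0_setI)
  show "pconj n i D \<in> auto (W n)"
  proof (rule auto_W_intro[OF pconj_hom _ _ pconj_pconj pconj_pconj])
    show "pconj n i D \<in> extensional (carrier (W n))" by (simp add: pconj_eq)
    show "pconj n i D \<in> carrier (W n) \<rightarrow> carrier (W n)" using hom_in_carrier[OF pconj_hom] by blast
  qed
  have gi: "[i] \<in> carrier (W n)" using i W_gen_in_carrier by auto
  then have "inv\<^bsub>W n\<^esub> [i] = [i]" by (simp add: W_inv)
  then show "\<exists>g\<in>carrier (W n). pconj n i D [j] = g \<otimes>\<^bsub>W n\<^esub> [j] \<otimes>\<^bsub>W n\<^esub> inv\<^bsub>W n\<^esub> g"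
    if j: "j \<in> {1..n}" for j
  proof (cases "j \<in> D")
    case True
    then show ?thesis using j gi \<open>inv\<^bsub>W n\<^esub> [i] = [i]\<close>
      by (auto simp: pconj_gen pconj_img_def intro!: bexI[of _ "[i]"])
  next
    case False
    show ?thesis
      by (rule bexI[of _ "[]"]) (use j False in \<open>simp_all add: pconj_gen pconj_img_def W_mult W_carrier W_inv\<close>)
  qed
qed

end

lemma pconj_empty: "i \<in> {1..n} \<Longrightarrow> pconj n i {} = (\<lambda>x\<in>carrier (W n). x)"
  by (rule W_endo_eqI[OF pconj_hom restrict_id_hom_W])
    (auto simp: pconj_eq pconj_gen W_gen_in_carrier pconj_img_def W_one W_mult)

lemma pconj_complement: "i \<in> {1..n} \<Longrightarrow> pconj n i ({1..n} - {i}) = conjW n [i]"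
proof -
  interpret Wn: group "W n" by (rule group_W)
  assume i: "i \<in> {1..n}"
  have gi: "[i] \<in> carrier (W n)" using i W_gen_in_carrier by auto
  have "inv\<^bsub>W n\<^esub> [i] = [i]" using gi by (simp add: W_inv)
  then show ?thesis
    using i gi
    by (intro W_endo_eqI[OF pconj_hom conjW_hom[OF gi]])
      (auto simp: pconj_eq conjW_def pconj_gen pconj_img_def conjW_apply Wn.m_assoc W_gen_square
        W_gen_in_carrier)
qed

section \<open>The projection $\varphi$\<close>

definition proj :: "nat \<Rightarrow> nat \<Rightarrow> nat list \<Rightarrow> nat list" where
  "proj k n = (\<lambda>w\<in>carrier (W n). gen_prod (W k) (\<lambda>j. if j \<le> k then [j] else []) w)"

definition aut_proj :: "nat \<Rightarrow> nat \<Rightarrow> (nat list \<Rightarrow> nat list) \<Rightarrow> (nat list \<Rightarrow> nat list)" where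
  "aut_proj k n f = (\<lambda>w\<in>carrier (W k). proj k n (f w))"

definition out_proj :: "nat \<Rightarrow> nat \<Rightarrow> (nat list \<Rightarrow> nat list) \<Rightarrow> (nat list \<Rightarrow> nat list) set" where
  "out_proj k n f = r_coset (Aut0 k) (Inn k) (aut_proj k n f)"

context
  fixes k n :: nat
  assumes k_le_n: "k \<le> n"
begin

lemma proj_gen_involution:
  "j \<in> {1..n} \<Longrightarrow> (if j \<le> k then [j] else []) \<in> carrier (W k) \<and>
     (if j \<le> k then [j] else []) \<otimes>\<^bsub>W k\<^esub> (if j \<le> k then [j] else []) = \<one>\<^bsub>W k\<^esub>"
  by (auto simp: W_carrier W_mult W_one)

lemma proj_hom: "proj k n \<in> hom (W n) (W k)"
  unfolding proj_def by (rule group.gen_prod_hom[OF group_W proj_gen_involution])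

lemma proj_gen: "j \<in> {1..n} \<Longrightarrow> proj k n [j] = (if j \<le> k then [j] else [])"
  unfolding proj_def by (rule group.gen_prod_hom_gen[OF group_W proj_gen_involution])

lemma proj_in_carrier: "w \<in> carrier (W n) \<Longrightarrow> proj k n w \<in> carrier (W k)"
  by (rule hom_in_carrier[OF proj_hom])

lemma proj_fixes: "w \<in> carrier (W k) \<Longrightarrow> proj k n w = w"
  by (rule W_hom_eqI[OF group_W hom_W_restrict_source[OF proj_hom k_le_n] id_hom_W])
    (use k_le_n in \<open>auto simp: proj_gen\<close>)

lemma proj_conj_high_gen:
  assumes "g \<in> carrier (W n)" "j \<in> {1..n}" "k < j"
  shows "proj k n (g \<otimes>\<^bsub>W n\<^esub> [j] \<otimes>\<^bsub>W n\<^esub> inv\<^bsub>W n\<^esub> g) = []"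
proof -
  interpret Wk: group "W k" by (rule group_W)
  interpret P: group_hom "W n" "W k" "proj k n" by (rule group_hom_W[OF proj_hom])
  have "proj k n [j] = \<one>\<^bsub>W k\<^esub>" using assms by (simp add: proj_gen W_one)
  then have "proj k n (g \<otimes>\<^bsub>W n\<^esub> [j] \<otimes>\<^bsub>W n\<^esub> inv\<^bsub>W n\<^esub> g)
      = proj k n g \<otimes>\<^bsub>W k\<^esub> \<one>\<^bsub>W k\<^esub> \<otimes>\<^bsub>W k\<^esub> inv\<^bsub>W k\<^esub> proj k n g"
    using assms by (simp add: W_gen_in_carrier)
  also have "\<dots> = \<one>\<^bsub>W k\<^esub>" using assms(1) by simp
  finally show ?thesis by (simp add: W_one)
qed

text \<open>The point of the construction: an element of $\mathrm{Aut}^0(W_n)$ sends every generator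
  killed by the projection to a conjugate of itself, hence into the kernel of the projection.\<close>

lemma proj_absorb:
  assumes f: "f \<in> Aut0_set n" and w: "w \<in> carrier (W n)"
  shows "proj k n (f (proj k n w)) = proj k n (f w)"
proof (rule W_hom_eqI[OF group_W _ _ _ w])
  have f_hom: "f \<in> hom (W n) (W n)" using f by (rule Aut0_set_hom)
  show "(\<lambda>w. proj k n (f (proj k n w))) \<in> hom (W n) (W k)"
    using hom_compose[OF hom_compose[OF hom_W_extend_target[OF proj_hom k_le_n] f_hom] proj_hom]
    by (simp add: o_def)
  show "(\<lambda>w. proj k n (f w)) \<in> hom (W n) (W k)"
    using hom_compose[OF f_hom proj_hom] by (simp add: o_def)
  fix j assume j: "j \<in> {1..n}"
  show "proj k n (f (proj k n [j])) = proj k n (f [j])"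
  proof (cases "j \<le> k")
    case False
    obtain g where "g \<in> carrier (W n)" "f [j] = g \<otimes>\<^bsub>W n\<^esub> [j] \<otimes>\<^bsub>W n\<^esub> inv\<^bsub>W n\<^esub> g"
      using f j by (rule Aut0_setE)
    then show ?thesis
      using j False hom_W_Nil[OF f_hom] hom_W_Nil[OF proj_hom] proj_conj_high_gen
      by (simp add: proj_gen)
  qed (use j in \<open>simp add: proj_gen\<close>)
qed

lemma aut_proj_hom:
  assumes "f \<in> Aut0_set n"
  shows "aut_proj k n f \<in> hom (W k) (W k)"
proof -
  have "(\<lambda>w. proj k n (f w)) \<in> hom (W k) (W k)"
    using hom_W_restrict_source[OF hom_compose[OF Aut0_set_hom[OF assms] proj_hom] k_le_n]
    by (simp add: o_def)
  then show ?thesis by (rule group.hom_restrict[OF group_W]) (simp add: aut_proj_def)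
qed

lemma aut_proj_compose:
  assumes f: "f \<in> Aut0_set n" and h: "h \<in> Aut0_set n" and w: "w \<in> carrier (W k)"
  shows "aut_proj k n (compose (carrier (W n)) f h) w = aut_proj k n f (aut_proj k n h w)"
proof -
  have wn: "w \<in> carrier (W n)" using w W_carrier_mono[OF k_le_n] by auto
  have hw: "h w \<in> carrier (W n)" using Aut0_set_hom[OF h] wn by (rule hom_in_carrier)
  show ?thesis
    using w wn proj_absorb[OF f hw] proj_in_carrier[OF hw] by (simp add: aut_proj_def compose_def)
qed

lemma aut_proj_in_Aut0_set: "f \<in> Aut0_set n \<Longrightarrow> aut_proj k n f \<in> Aut0_set k"
proof (rule Aut0_setI)
  interpret A: group "Aut0 n" by (rule group_Aut0)
  interpret P: group_hom "W n" "W k" "proj k n" by (rule group_hom_W[OF proj_hom])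
  assume f: "f \<in> Aut0_set n"
  define h where "h = inv\<^bsub>Aut0 n\<^esub> f"
  have h: "h \<in> Aut0_set n" using f h_def A.inv_closed Aut0_carrier by auto
  show "aut_proj k n f \<in> auto (W k)"
  proof (rule auto_W_intro[OF aut_proj_hom[OF f], of "aut_proj k n h"])
    show "aut_proj k n f \<in> extensional (carrier (W k))" by (simp add: aut_proj_def)
    show "aut_proj k n h \<in> carrier (W k) \<rightarrow> carrier (W k)"
      using hom_in_carrier[OF aut_proj_hom[OF h]] by blast
    fix x assume x: "x \<in> carrier (W k)"
    then have xn: "x \<in> carrier (W n)" using W_carrier_mono[OF k_le_n] by auto
    show "aut_proj k n h (aut_proj k n f x) = x"
      using aut_proj_compose[OF h f x] Aut0_inv_apply(2)[OF f xn] x xn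
      by (simp add: h_def aut_proj_def compose_def proj_fixes)
    show "aut_proj k n f (aut_proj k n h x) = x"
      using aut_proj_compose[OF f h x] Aut0_inv_apply(1)[OF f xn] x xn
      by (simp add: h_def aut_proj_def compose_def proj_fixes)
  qed
  fix j :: nat assume j: "j \<in> {1..k}"
  then have jn: "j \<in> {1..n}" using k_le_n by auto
  obtain g where g: "g \<in> carrier (W n)" "f [j] = g \<otimes>\<^bsub>W n\<^esub> [j] \<otimes>\<^bsub>W n\<^esub> inv\<^bsub>W n\<^esub> g"
    using f jn by (rule Aut0_setE)
  have "aut_proj k n f [j] = proj k n g \<otimes>\<^bsub>W k\<^esub> [j] \<otimes>\<^bsub>W k\<^esub> inv\<^bsub>W k\<^esub> proj k n g"
    using g j jn by (simp add: aut_proj_def W_gen_in_carrier proj_gen)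
  then show "\<exists>g\<in>carrier (W k). aut_proj k n f [j] = g \<otimes>\<^bsub>W k\<^esub> [j] \<otimes>\<^bsub>W k\<^esub> inv\<^bsub>W k\<^esub> g"
    using proj_in_carrier g by blast
qed

lemma aut_proj_hom_Aut0: "aut_proj k n \<in> hom (Aut0 n) (Aut0 k)"
proof (rule homI)
  fix f h assume "f \<in> carrier (Aut0 n)" "h \<in> carrier (Aut0 n)"
  then have f: "f \<in> Aut0_set n" and h: "h \<in> Aut0_set n" by (auto simp: Aut0_carrier)
  have "aut_proj k n (compose (carrier (W n)) f h) = compose (carrier (W k)) (aut_proj k n f) (aut_proj k n h)"
    using aut_proj_compose[OF f h] by (auto simp: compose_def aut_proj_def)
  then show "aut_proj k n (f \<otimes>\<^bsub>Aut0 n\<^esub> h) = aut_proj k n f \<otimes>\<^bsub>Aut0 k\<^esub> aut_proj k n h"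
    using f h aut_proj_in_Aut0_set by (simp add: Aut0_mult)
qed (simp add: Aut0_carrier aut_proj_in_Aut0_set)

lemma aut_proj_conjW: "g \<in> carrier (W n) \<Longrightarrow> aut_proj k n (conjW n g) = conjW k (proj k n g)"
  unfolding aut_proj_def conjW_def[of k]
proof (rule restrict_ext)
  interpret P: group_hom "W n" "W k" "proj k n" by (rule group_hom_W[OF proj_hom])
  fix x assume g: "g \<in> carrier (W n)" and x: "x \<in> carrier (W k)"
  then have xn: "x \<in> carrier (W n)" using W_carrier_mono[OF k_le_n] by auto
  then show "proj k n (conjW n g x) = proj k n g \<otimes>\<^bsub>W k\<^esub> x \<otimes>\<^bsub>W k\<^esub> inv\<^bsub>W k\<^esub> proj k n g"
    using g x by (simp add: conjW_apply proj_fixes)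
qed

lemma aut_proj_pconj:
  assumes i: "i \<in> {1..n}" and D: "D \<subseteq> {1..n}" "i \<notin> D"
  shows "aut_proj k n (pconj n i D) = (if i \<le> k then pconj k i (D \<inter> {1..k}) else (\<lambda>x\<in>carrier (W k). x))"
proof -
  interpret P: group_hom "W n" "W k" "proj k n" by (rule group_hom_W[OF proj_hom])
  have gi: "[i] \<in> carrier (W n)" using i W_gen_in_carrier by auto
  have "aut_proj k n (pconj n i D) [j] = proj k n [i] \<otimes>\<^bsub>W k\<^esub> [j] \<otimes>\<^bsub>W k\<^esub> proj k n [i]"
    if "j \<in> D" "j \<in> {1..k}" for j
    using that gi k_le_n W_gen_in_carrier[of j n]
    by (simp add: aut_proj_def W_gen_in_carrier pconj_gen[OF i D] pconj_img_def proj_gen)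
  moreover have "aut_proj k n (pconj n i D) [j] = [j]" if "j \<notin> D" "j \<in> {1..k}" for j
    using that k_le_n
    by (simp add: aut_proj_def W_gen_in_carrier pconj_gen[OF i D] pconj_img_def proj_gen)
  ultimately have gen: "aut_proj k n (pconj n i D) [j] =
      (if i \<le> k then pconj k i (D \<inter> {1..k}) [j] else [j])" if "j \<in> {1..k}" for j
    using that i D by (cases "j \<in> D") (auto simp: pconj_gen pconj_img_def proj_gen W_mult)
  show ?thesis
  proof (cases "i \<le> k")
    case True
    have "aut_proj k n (pconj n i D) = pconj k i (D \<inter> {1..k})"
      using True gen i D
      by (intro W_endo_eqI[OF aut_proj_hom[OF pconj_in_Aut0_set[OF i D]] pconj_hom])
        (auto simp: aut_proj_def pconj_eq)
    then show ?thesis using True by simp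
  next
    case False
    have "aut_proj k n (pconj n i D) = (\<lambda>x\<in>carrier (W k). x)"
      using False gen
      by (intro W_endo_eqI[OF aut_proj_hom[OF pconj_in_Aut0_set[OF i D]] restrict_id_hom_W])
        (auto simp: aut_proj_def W_gen_in_carrier)
    then show ?thesis using False by simp
  qed
qed

lemma out_proj_hom: "out_proj k n \<in> hom (Aut0 n) (Out0 k)"
proof -
  have "(\<lambda>f. r_coset (Aut0 k) (Inn k) (aut_proj k n f)) \<in> hom (Aut0 n) (Aut0 k Mod Inn k)"
    using hom_compose[OF aut_proj_hom_Aut0 normal.r_coset_hom_Mod[OF normal_Inn]] by (simp add: o_def)
  then show ?thesis by (simp add: out_proj_def[abs_def] Out0_def)
qed

lemma out_proj_Inn: "c \<in> Inn n \<Longrightarrow> out_proj k n c = \<one>\<^bsub>Out0 k\<^esub>"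
proof -
  assume "c \<in> Inn n"
  then obtain g where g: "g \<in> carrier (W n)" "c = conjW n g" unfolding Inn_def by auto
  have "conjW k (proj k n g) \<in> Inn k" using proj_in_carrier[OF g(1)] unfolding Inn_def by auto
  then show ?thesis using g aut_proj_conjW by (simp add: out_proj_def Inn_coset_eq_one)
qed

lemma Out0_hom_induced:
  obtains \<phi> where "\<phi> \<in> hom (Out0 n) (Out0 k)"
    and "\<And>f. f \<in> Aut0_set n \<Longrightarrow> \<phi> (r_coset (Aut0 n) (Inn n) f) = out_proj k n f"
proof -
  interpret group_hom "Aut0 n" "Out0 k" "out_proj k n"
    by (simp add: group_hom.intro group_hom_axioms.intro group_Aut0 group_Out0 out_proj_hom)
  have Inn_kernel: "Inn n \<subseteq> kernel (Aut0 n) (Out0 k) (out_proj k n)"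
    using out_proj_Inn Inn_subset_Aut0_set Aut0_carrier by (auto simp: kernel_def)
  show ?thesis
    by (rule FactGroup_universal_kernel[OF normal_Inn Inn_kernel], rule that)
      (simp_all add: Out0_def Aut0_carrier)
qed

end

section \<open>The twist of an automorphism of $W_k$\<close>

definition odd_a1 :: "nat list \<Rightarrow> bool" where
  "odd_a1 w = odd (count_list w 1)"

lemma odd_a1_Nil [simp]: "\<not> odd_a1 []"
  and odd_a1_Cons [simp]: "odd_a1 (a # w) = ((a = 1) \<noteq> odd_a1 w)"
  and odd_a1_append [simp]: "odd_a1 (u @ v) = (odd_a1 u \<noteq> odd_a1 v)"
  and odd_a1_rev [simp]: "odd_a1 (rev u) = odd_a1 u"
  by (simp_all add: odd_a1_def)

lemma odd_a1_wprod: "odd_a1 (wprod u v) = (odd_a1 u \<noteq> odd_a1 v)"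
proof (induction u)
  case (Cons a u)
  have "odd_a1 (red_cons a w) = ((a = 1) \<noteq> odd_a1 w)" for w by (cases w) auto
  then show ?case using Cons by auto
qed simp

lemma odd_a1_mult: "odd_a1 (x \<otimes>\<^bsub>W m\<^esub> y) = (odd_a1 x \<noteq> odd_a1 y)"
  by (simp add: W_mult odd_a1_wprod)

lemma odd_a1_inv: "x \<in> carrier (W m) \<Longrightarrow> odd_a1 (inv\<^bsub>W m\<^esub> x) = odd_a1 x"
  by (simp add: W_inv)

lemma odd_a1_conj: "odd_a1 (g \<otimes>\<^bsub>W m\<^esub> [a] \<otimes>\<^bsub>W m\<^esub> inv\<^bsub>W m\<^esub> g) = odd_a1 [a]" if "g \<in> carrier (W m)"
  using that by (cases "odd_a1 g") (auto simp: odd_a1_mult odd_a1_inv)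

lemma odd_a1_Aut0:
  assumes f: "f \<in> Aut0_set m" and x: "x \<in> carrier (W m)"
  shows "odd_a1 (f x) = odd_a1 x"
  using x
proof (induction x)
  case Nil
  then show ?case using hom_W_Nil[OF Aut0_set_hom[OF f]] by simp
next
  case (Cons a w)
  then have "a # w = [a] \<otimes>\<^bsub>W m\<^esub> w" "w \<in> carrier (W m)" "a \<in> {1..m}"
    using W_Cons by blast+
  moreover obtain g where "g \<in> carrier (W m)" "f [a] = g \<otimes>\<^bsub>W m\<^esub> [a] \<otimes>\<^bsub>W m\<^esub> inv\<^bsub>W m\<^esub> g"
    using f \<open>a \<in> {1..m}\<close> by (rule Aut0_setE)
  ultimately show ?case
    using Cons.IH hom_mult[OF Aut0_set_hom[OF f] W_gen_in_carrier]
    by (metis odd_a1_conj odd_a1_mult)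
qed

lemma wprod_eq_append: "reduced (u @ v) \<Longrightarrow> wprod u v = u @ v"
proof (induction u)
  case (Cons a u)
  then have "reduced (u @ v)" by (cases "u @ v") auto
  then show ?case using Cons by (cases "u @ v") (auto simp: successively_Cons)
qed simp

lemma wprod_gen_right:
  assumes "reduced g"
  shows "wprod g [a] = (if g \<noteq> [] \<and> last g = a then butlast g else g @ [a])"
proof (cases "g \<noteq> [] \<and> last g = a")
  case True
  then obtain g' where g': "g = g' @ [a]" by (metis append_butlast_last_id)
  then have "reduced g'" using assms by (auto simp: successively_append_iff)
  then show ?thesis using True g' wprod_Nil_right by (simp add: foldr_append)
next
  case False
  then have "reduced (g @ [a])" using assms by (auto simp: successively_append_iff)
  then show ?thesis using False wprod_eq_append by auto
qed

lemma W_centraliser_gen: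
  assumes g: "g \<in> carrier (W m)" and comm: "g \<otimes>\<^bsub>W m\<^esub> [a] = [a] \<otimes>\<^bsub>W m\<^esub> g"
  shows "g = [] \<or> g = [a]"
proof (rule ccontr)
  assume ne: "\<not> (g = [] \<or> g = [a])"
  then obtain x r where g_eq: "g = x # r" by (cases g) auto
  have rg: "reduced g" using g by (simp add: W_carrier)
  have eq: "(if last g = a then butlast g else g @ [a]) = (if x = a then r else a # g)"
    using comm wprod_gen_right[OF rg] g_eq by (simp add: W_mult)
  show False
  proof (cases "x = a \<and> last g = a")
    case True
    then have "r \<noteq> []" "butlast g = r" using eq ne g_eq by auto
    then have "r = x # butlast r" using g_eq by simp
    then show False using rg g_eq by (cases r) auto
  next
    case False
    then show False using eq g_eq by (auto split: if_splits dest: arg_cong[of _ _ length])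
  qed
qed

definition half :: "nat list \<Rightarrow> nat list" where
  "half w = take (length w div 2) w"

lemma half_conj_reduced:
  assumes g: "reduced g" and l: "g = [] \<or> last g \<noteq> a"
  shows "half (wprod (wprod g [a]) (rev g)) = g"
proof -
  have ga: "reduced (g @ [a])" using g l by (auto simp: successively_append_iff)
  moreover have "reduced (a # rev g)"
    using successively_rev[of "(\<noteq>)" "g @ [a]"] ga by simp
  ultimately have "reduced ((g @ [a]) @ rev g)"
    by (auto simp: successively_append_iff successively_Cons)
  then have "wprod (wprod g [a]) (rev g) = g @ a # rev g"
    using wprod_eq_append[OF ga] wprod_eq_append[of "g @ [a]" "rev g"] by (simp del: foldr_append)
  then show ?thesis by (simp add: half_def)
qed

text \<open>Although the conjugator $g$ in $g a g^{-1}$ is determined only up to right multiplication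
  by the centraliser $\{1, a\}$, for $a \neq 1$ the parity of the number of letters $1$ in $g$
  is determined and can be read off the first half of the reduced word.\<close>

lemma odd_a1_half_conj:
  assumes g: "g \<in> carrier (W m)" and a: "a \<in> {1..m}" "a \<noteq> 1"
  shows "odd_a1 (half (g \<otimes>\<^bsub>W m\<^esub> [a] \<otimes>\<^bsub>W m\<^esub> inv\<^bsub>W m\<^esub> g)) = odd_a1 g"
proof (cases "g = [] \<or> last g \<noteq> a")
  case True
  then show ?thesis using g half_conj_reduced by (simp add: W_carrier W_mult W_inv)
next
  case False
  interpret Wm: group "W m" by (rule group_W)
  obtain g' where g': "g = g' @ [a]" using False by (metis append_butlast_last_id)
  have rg': "reduced g'" and l': "g' = [] \<or> last g' \<noteq> a"
    using g g' by (auto simp: W_carrier successively_append_iff)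
  have g'c: "g' \<in> carrier (W m)" and ga: "[a] \<in> carrier (W m)"
    using g g' rg' a by (auto simp: W_carrier)
  have "g = g' \<otimes>\<^bsub>W m\<^esub> [a]" using g g' by (simp add: W_mult W_carrier wprod_eq_append)
  then have "g \<otimes>\<^bsub>W m\<^esub> [a] \<otimes>\<^bsub>W m\<^esub> inv\<^bsub>W m\<^esub> g
      = g' \<otimes>\<^bsub>W m\<^esub> ([a] \<otimes>\<^bsub>W m\<^esub> [a] \<otimes>\<^bsub>W m\<^esub> inv\<^bsub>W m\<^esub> [a]) \<otimes>\<^bsub>W m\<^esub> inv\<^bsub>W m\<^esub> g'"
    using Wm.conj_conj[OF g'c ga ga] by simp
  also have "\<dots> = g' \<otimes>\<^bsub>W m\<^esub> [a] \<otimes>\<^bsub>W m\<^esub> inv\<^bsub>W m\<^esub> g'"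
    using ga by (simp add: W_inv W_mult)
  finally show ?thesis
    using half_conj_reduced[OF rg' l'] g'c g' a by (simp add: W_mult W_inv)
qed

text \<open>The parity of the letters $1$ in a conjugator of $f(a_2) = g a_2 g^{-1}$; it is a
  homomorphism $\mathrm{Aut}^0(W_k) \to \mathbb{Z}/2$ that detects conjugation by $a_1$.\<close>

definition twist :: "(nat list \<Rightarrow> nat list) \<Rightarrow> bool" where
  "twist f = odd_a1 (half (f [2]))"

lemma twist_eq:
  "2 \<le> k \<Longrightarrow> g \<in> carrier (W k) \<Longrightarrow> f [2] = g \<otimes>\<^bsub>W k\<^esub> [2] \<otimes>\<^bsub>W k\<^esub> inv\<^bsub>W k\<^esub> g \<Longrightarrow> twist f = odd_a1 g"
  using odd_a1_half_conj[of g k 2] by (simp add: twist_def)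

lemma twist_mult:
  assumes k: "2 \<le> k" and f: "f \<in> Aut0_set k" and h: "h \<in> Aut0_set k"
  shows "twist (f \<otimes>\<^bsub>Aut0 k\<^esub> h) = (twist f \<noteq> twist h)"
proof -
  interpret Wk: group "W k" by (rule group_W)
  have two: "2 \<in> {1..k}" using k by simp
  obtain gf where gf: "gf \<in> carrier (W k)" "f [2] = gf \<otimes>\<^bsub>W k\<^esub> [2] \<otimes>\<^bsub>W k\<^esub> inv\<^bsub>W k\<^esub> gf"
    using f two by (rule Aut0_setE)
  obtain gh where gh: "gh \<in> carrier (W k)" "h [2] = gh \<otimes>\<^bsub>W k\<^esub> [2] \<otimes>\<^bsub>W k\<^esub> inv\<^bsub>W k\<^esub> gh"
    using h two by (rule Aut0_setE)
  have fh: "f \<in> hom (W k) (W k)" using f by (rule Aut0_set_hom)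
  have g2: "[2] \<in> carrier (W k)" using two by (rule W_gen_in_carrier)
  have fgh: "f gh \<in> carrier (W k)" using fh gh(1) by (rule hom_in_carrier)
  have "(f \<otimes>\<^bsub>Aut0 k\<^esub> h) [2] = f gh \<otimes>\<^bsub>W k\<^esub> f [2] \<otimes>\<^bsub>W k\<^esub> inv\<^bsub>W k\<^esub> (f gh)"
    using f h g2 gh by (simp add: Aut0_mult compose_def hom_mult[OF fh] hom_W_inv[OF fh])
  also have "\<dots> = (f gh \<otimes>\<^bsub>W k\<^esub> gf) \<otimes>\<^bsub>W k\<^esub> [2] \<otimes>\<^bsub>W k\<^esub> inv\<^bsub>W k\<^esub> (f gh \<otimes>\<^bsub>W k\<^esub> gf)"
    using gf fgh g2 by (simp add: Wk.conj_conj)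
  finally have "twist (f \<otimes>\<^bsub>Aut0 k\<^esub> h) = odd_a1 (f gh \<otimes>\<^bsub>W k\<^esub> gf)"
    using fgh gf k by (intro twist_eq) auto
  then show ?thesis
    using twist_eq[of k gf f, OF k gf] twist_eq[of k gh h, OF k gh] odd_a1_Aut0[OF f gh(1)]
    by (auto simp: odd_a1_mult)
qed

section \<open>The section $\psi$\<close>

definition Aut0_fix1 :: "nat \<Rightarrow> (nat list \<Rightarrow> nat list) set" where
  "Aut0_fix1 k = {f \<in> Aut0_set k. f [1] = [1]}"

definition a1_pow :: "bool \<Rightarrow> nat list" where
  "a1_pow b = (if b then [1] else [])"

text \<open>The extension of $f \in \mathrm{Aut}^0(W_k)$ to $W_n$ conjugates each new generator by
  $a_1^{\mathrm{twist}\,f}$; this makes conjugation by $a_1$ on $W_k$ extend to an inner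
  automorphism of $W_n$.\<close>

definition ext_img :: "nat \<Rightarrow> nat \<Rightarrow> (nat list \<Rightarrow> nat list) \<Rightarrow> nat \<Rightarrow> nat list" where
  "ext_img k n f j =
     (if j \<le> k then f [j] else a1_pow (twist f) \<otimes>\<^bsub>W n\<^esub> [j] \<otimes>\<^bsub>W n\<^esub> a1_pow (twist f))"

definition aut_ext :: "nat \<Rightarrow> nat \<Rightarrow> (nat list \<Rightarrow> nat list) \<Rightarrow> (nat list \<Rightarrow> nat list)" where
  "aut_ext k n f = (\<lambda>w\<in>carrier (W n). gen_prod (W n) (ext_img k n f) w)"

lemma a1_pow_in_carrier: "1 \<le> m \<Longrightarrow> a1_pow b \<in> carrier (W m)"
  by (simp add: a1_pow_def W_carrier)

lemma a1_pow_mult: "a1_pow a \<otimes>\<^bsub>W m\<^esub> a1_pow b = a1_pow (a \<noteq> b)"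
  by (simp add: a1_pow_def W_mult)

lemma a1_pow_inv: "1 \<le> m \<Longrightarrow> inv\<^bsub>W m\<^esub> (a1_pow b) = a1_pow b"
  by (simp add: a1_pow_def W_inv W_carrier)

lemma Aut0_fix1_mult:
  "1 \<le> k \<Longrightarrow> f \<in> Aut0_fix1 k \<Longrightarrow> h \<in> Aut0_fix1 k \<Longrightarrow> f \<otimes>\<^bsub>Aut0 k\<^esub> h \<in> Aut0_fix1 k"
  using monoid.m_closed[OF group.is_monoid[OF group_Aut0], of f k h]
  by (auto simp: Aut0_fix1_def Aut0_carrier Aut0_mult compose_def W_carrier)

lemma Aut0_fix1_inv:
  assumes "f \<in> Aut0_fix1 k" "1 \<le> k"
  shows "inv\<^bsub>Aut0 k\<^esub> f \<in> Aut0_fix1 k"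
proof -
  have "f \<in> Aut0_set k" "f [1] = [1]" "[1] \<in> carrier (W k)"
    using assms by (auto simp: Aut0_fix1_def W_carrier)
  then show ?thesis
    using Aut0_inv_apply(2)[of f k "[1]"] group.inv_closed[OF group_Aut0, of f k]
    by (auto simp: Aut0_fix1_def Aut0_carrier)
qed

lemma Aut0_fix1_one: "1 \<le> k \<Longrightarrow> \<one>\<^bsub>Aut0 k\<^esub> \<in> Aut0_fix1 k"
  using monoid.one_closed[OF group.is_monoid[OF group_Aut0], of k]
  by (simp add: Aut0_fix1_def Aut0_carrier Aut0_one W_carrier)

lemma twist_one: "2 \<le> k \<Longrightarrow> \<not> twist \<one>\<^bsub>Aut0 k\<^esub>"
  using twist_eq[of k "[]" "\<one>\<^bsub>Aut0 k\<^esub>"]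
  by (simp add: Aut0_one W_carrier W_mult W_inv)

lemma conjW_a1_in_Aut0_fix1: "1 \<le> k \<Longrightarrow> conjW k [1] \<in> Aut0_fix1 k"
  using conjW_in_Aut0_set[of "[1]" k] by (simp add: Aut0_fix1_def W_carrier conjW_apply W_inv W_mult)

lemma twist_conjW_a1: "2 \<le> k \<Longrightarrow> twist (conjW k [1])"
  using twist_eq[of k "[1]" "conjW k [1]"] by (simp add: conjW_apply W_carrier)

lemma Out0_fix1_representative:
  assumes "1 \<le> k" "C \<in> carrier (Out0 k)"
  obtains f where "f \<in> Aut0_fix1 k" "C = r_coset (Aut0 k) (Inn k) f"
proof -
  interpret A: group "Aut0 k" by (rule group_Aut0)
  interpret Wk: group "W k" by (rule group_W)
  obtain f0 where f0: "f0 \<in> Aut0_set k" "C = r_coset (Aut0 k) (Inn k) f0"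
    using assms(2) by (auto simp: Out0_carrier)
  have one: "1 \<in> {1..k}" "[1] \<in> carrier (W k)" using assms(1) by (auto simp: W_carrier)
  obtain g where g: "g \<in> carrier (W k)" "f0 [1] = g \<otimes>\<^bsub>W k\<^esub> [1] \<otimes>\<^bsub>W k\<^esub> inv\<^bsub>W k\<^esub> g"
    using f0(1) one(1) by (rule Aut0_setE)
  define c where "c = conjW k (inv\<^bsub>W k\<^esub> g)"
  have cI: "c \<in> Inn k" unfolding c_def Inn_def using g by auto
  have cA: "c \<in> Aut0_set k" using cI Inn_subset_Aut0_set by auto
  have "(c \<otimes>\<^bsub>Aut0 k\<^esub> f0) [1] = [1]"
    using cA f0 g one by (simp add: Aut0_mult compose_def c_def conjW_apply Wk.m_assoc)
  then have "c \<otimes>\<^bsub>Aut0 k\<^esub> f0 \<in> Aut0_fix1 k"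
    using cA f0 A.m_closed by (simp add: Aut0_fix1_def Aut0_carrier)
  moreover have "r_coset (Aut0 k) (Inn k) (c \<otimes>\<^bsub>Aut0 k\<^esub> f0) = C"
    using A.rcos_mult_absorb[OF subgroup_Inn cI] f0 by (simp add: Aut0_carrier)
  ultimately show ?thesis using that by blast
qed

lemma Aut0_fix1_Inn:
  assumes "1 \<le> k" "c \<in> Aut0_fix1 k" "c \<in> Inn k"
  shows "c = \<one>\<^bsub>Aut0 k\<^esub> \<or> c = conjW k [1]"
proof -
  interpret Wk: group "W k" by (rule group_W)
  obtain g where g: "g \<in> carrier (W k)" "c = conjW k g" using assms(3) unfolding Inn_def by auto
  have g1: "[1] \<in> carrier (W k)" using assms(1) by (simp add: W_carrier)
  have "g \<otimes>\<^bsub>W k\<^esub> [1] \<otimes>\<^bsub>W k\<^esub> inv\<^bsub>W k\<^esub> g = [1]"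
    using assms(2) g g1 by (simp add: Aut0_fix1_def conjW_apply)
  then have "g \<otimes>\<^bsub>W k\<^esub> [1] = [1] \<otimes>\<^bsub>W k\<^esub> g"
    using g g1 by (metis Wk.inv_solve_right Wk.m_closed)
  then have "g = [] \<or> g = [1]" using W_centraliser_gen[OF g(1)] by simp
  then show ?thesis using g conjW_one[of k] by (auto simp: W_one)
qed

context
  fixes k n :: nat
  assumes two_le_k: "2 \<le> k" and k_le_n: "k \<le> n"
begin

lemma ext_img_involution:
  assumes f: "f \<in> Aut0_set k" and j: "j \<in> {1..n}"
  shows "ext_img k n f j \<in> carrier (W n) \<and> ext_img k n f j \<otimes>\<^bsub>W n\<^esub> ext_img k n f j = \<one>\<^bsub>W n\<^esub>"
proof (cases "j \<le> k")
  case True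
  have fh: "f \<in> hom (W k) (W k)" using f by (rule Aut0_set_hom)
  have gj: "[j] \<in> carrier (W k)" using j True by (simp add: W_carrier)
  have "f [j] \<otimes>\<^bsub>W k\<^esub> f [j] = \<one>\<^bsub>W k\<^esub>"
    using hom_mult[OF fh gj gj] hom_W_Nil[OF fh] by (simp add: W_gen_square W_one)
  then show ?thesis
    using True hom_in_carrier[OF fh gj] W_carrier_mono[OF k_le_n] by (auto simp: ext_img_def W_mult W_one)
next
  case False
  interpret Wn: group "W n" by (rule group_W)
  have e: "a1_pow (twist f) \<in> carrier (W n)" using two_le_k k_le_n a1_pow_in_carrier by simp
  have gj: "[j] \<in> carrier (W n)" using j by (rule W_gen_in_carrier)
  have "a1_pow (twist f) \<otimes>\<^bsub>W n\<^esub> a1_pow (twist f) = \<one>\<^bsub>W n\<^esub>"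
    by (simp add: a1_pow_mult a1_pow_def W_one W_mult)
  then show ?thesis
    using False e gj Wn.conj_square_one[OF e gj _ W_gen_square] by (simp add: ext_img_def)
qed

lemma aut_ext_hom: "f \<in> Aut0_set k \<Longrightarrow> aut_ext k n f \<in> hom (W n) (W n)"
  unfolding aut_ext_def by (rule group.gen_prod_hom[OF group_W ext_img_involution])

lemma aut_ext_gen: "f \<in> Aut0_set k \<Longrightarrow> j \<in> {1..n} \<Longrightarrow> aut_ext k n f [j] = ext_img k n f j"
  unfolding aut_ext_def by (rule group.gen_prod_hom_gen[OF group_W ext_img_involution])

lemma aut_ext_extends: "f \<in> Aut0_set k \<Longrightarrow> w \<in> carrier (W k) \<Longrightarrow> aut_ext k n f w = f w"
  by (rule W_hom_eqI[OF group_W hom_W_restrict_source[OF aut_ext_hom k_le_n]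
        hom_W_extend_target[OF Aut0_set_hom k_le_n]])
    (use k_le_n in \<open>auto simp: aut_ext_gen ext_img_def\<close>)

lemma aut_proj_aut_ext: "f \<in> Aut0_set k \<Longrightarrow> aut_proj k n (aut_ext k n f) = f"
  by (rule extensionalityI[OF _ Aut0_set_extensional])
    (auto simp: aut_proj_def aut_ext_extends proj_fixes[OF k_le_n] hom_in_carrier[OF Aut0_set_hom])

lemma aut_ext_a1_pow: "f \<in> Aut0_fix1 k \<Longrightarrow> aut_ext k n f (a1_pow b) = a1_pow b"
  using aut_ext_extends hom_W_Nil[OF Aut0_set_hom] two_le_k
  by (auto simp: a1_pow_def Aut0_fix1_def W_carrier)

lemma aut_ext_compose_high_gen:
  assumes f: "f \<in> Aut0_fix1 k" and h: "h \<in> Aut0_fix1 k" and j: "j \<in> {1..n}" "k < j"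
  shows "aut_ext k n f (aut_ext k n h [j]) = aut_ext k n (f \<otimes>\<^bsub>Aut0 k\<^esub> h) [j]"
proof -
  interpret Wn: group "W n" by (rule group_W)
  have fa: "f \<in> Aut0_set k" and ha: "h \<in> Aut0_set k" using f h by (auto simp: Aut0_fix1_def)
  have fha: "f \<otimes>\<^bsub>Aut0 k\<^esub> h \<in> Aut0_set k"
    using monoid.m_closed[OF group.is_monoid[OF group_Aut0]] fa ha by (simp add: Aut0_carrier)
  have e: "a1_pow b \<in> carrier (W n)" for b using two_le_k k_le_n a1_pow_in_carrier by simp
  have gj: "[j] \<in> carrier (W n)" using j by (simp add: W_gen_in_carrier)
  have "aut_ext k n f (aut_ext k n h [j])
      = a1_pow (twist h) \<otimes>\<^bsub>W n\<^esub> (a1_pow (twist f) \<otimes>\<^bsub>W n\<^esub> [j] \<otimes>\<^bsub>W n\<^esub> a1_pow (twist f))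
          \<otimes>\<^bsub>W n\<^esub> a1_pow (twist h)"
    using j gj e
    by (simp add: aut_ext_gen[OF ha] aut_ext_gen[OF fa] ext_img_def
        hom_mult[OF aut_ext_hom[OF fa]] aut_ext_a1_pow[OF f])
  also have "\<dots> = (a1_pow (twist h) \<otimes>\<^bsub>W n\<^esub> a1_pow (twist f)) \<otimes>\<^bsub>W n\<^esub> [j]
        \<otimes>\<^bsub>W n\<^esub> (a1_pow (twist f) \<otimes>\<^bsub>W n\<^esub> a1_pow (twist h))"
    using e gj by (simp add: Wn.m_assoc)
  also have "\<dots> = aut_ext k n (f \<otimes>\<^bsub>Aut0 k\<^esub> h) [j]"
    using j twist_mult[OF two_le_k fa ha]
    by (cases "twist f"; cases "twist h") (simp_all add: aut_ext_gen[OF fha] ext_img_def a1_pow_mult)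
  finally show ?thesis .
qed

lemma aut_ext_mult:
  assumes f: "f \<in> Aut0_fix1 k" and h: "h \<in> Aut0_fix1 k"
  shows "aut_ext k n (f \<otimes>\<^bsub>Aut0 k\<^esub> h) = compose (carrier (W n)) (aut_ext k n f) (aut_ext k n h)"
proof -
  have fa: "f \<in> Aut0_set k" and ha: "h \<in> Aut0_set k" using f h by (auto simp: Aut0_fix1_def)
  have fha: "f \<otimes>\<^bsub>Aut0 k\<^esub> h \<in> Aut0_set k"
    using monoid.m_closed[OF group.is_monoid[OF group_Aut0]] fa ha by (simp add: Aut0_carrier)
  show ?thesis
  proof (rule W_endo_eqI[OF aut_ext_hom[OF fha]])
    show "compose (carrier (W n)) (aut_ext k n f) (aut_ext k n h) \<in> hom (W n) (W n)"
      using hom_compose[OF aut_ext_hom[OF ha] aut_ext_hom[OF fa]]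
      by (simp add: compose_def o_def group.hom_restrict[OF group_W])
    fix j assume j: "j \<in> {1..n}"
    have gj: "[j] \<in> carrier (W n)" using j by (rule W_gen_in_carrier)
    show "aut_ext k n (f \<otimes>\<^bsub>Aut0 k\<^esub> h) [j] = compose (carrier (W n)) (aut_ext k n f) (aut_ext k n h) [j]"
    proof (cases "j \<le> k")
      case True
      then have gjk: "[j] \<in> carrier (W k)" using j by (simp add: W_carrier)
      have hj: "h [j] \<in> carrier (W k)" using hom_in_carrier[OF Aut0_set_hom[OF ha] gjk] .
      show ?thesis
        using True j gj gjk fa ha fha aut_ext_extends[OF fa hj]
        by (simp add: aut_ext_gen ext_img_def Aut0_mult compose_def)
    next
      case False
      then show ?thesis using aut_ext_compose_high_gen[OF f h j] gj by (simp add: compose_def)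
    qed
  qed (simp_all add: aut_ext_def compose_def)
qed

end

definition out_ext :: "nat \<Rightarrow> nat \<Rightarrow> (nat list \<Rightarrow> nat list) set \<Rightarrow> (nat list \<Rightarrow> nat list) set" where
  "out_ext k n C = r_coset (Aut0 n) (Inn n)
     (aut_ext k n (SOME f. f \<in> Aut0_fix1 k \<and> C = r_coset (Aut0 k) (Inn k) f))"

context
  fixes k n :: nat
  assumes two_le_k: "2 \<le> k" and k_le_n: "k \<le> n"
begin

lemma aut_ext_one: "aut_ext k n \<one>\<^bsub>Aut0 k\<^esub> = \<one>\<^bsub>Aut0 n\<^esub>"
proof -
  have one: "\<one>\<^bsub>Aut0 k\<^esub> \<in> Aut0_set k" using Aut0_fix1_one two_le_k by (simp add: Aut0_fix1_def)
  show ?thesis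
    unfolding Aut0_one[of n]
  proof (rule W_endo_eqI[OF aut_ext_hom[OF two_le_k k_le_n one] restrict_id_hom_W])
    fix j assume j: "j \<in> {1..n}"
    have "aut_ext k n \<one>\<^bsub>Aut0 k\<^esub> [j] = ext_img k n \<one>\<^bsub>Aut0 k\<^esub> j"
      by (rule aut_ext_gen[OF two_le_k k_le_n one j])
    also have "\<dots> = [j]"
      using j twist_one[OF two_le_k] by (auto simp: ext_img_def Aut0_one W_carrier a1_pow_def W_mult)
    finally show "aut_ext k n \<one>\<^bsub>Aut0 k\<^esub> [j] = (\<lambda>x\<in>carrier (W n). x) [j]"
      using W_gen_in_carrier[OF j] by simp
  qed (simp_all add: aut_ext_def)
qed

lemma aut_ext_in_Aut0_set:
  assumes f: "f \<in> Aut0_fix1 k"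
  shows "aut_ext k n f \<in> Aut0_set n"
proof (rule Aut0_setI)
  interpret A: group "Aut0 k" by (rule group_Aut0)
  have fa: "f \<in> Aut0_set k" using f by (simp add: Aut0_fix1_def)
  define h where "h = inv\<^bsub>Aut0 k\<^esub> f"
  have h: "h \<in> Aut0_fix1 k" using Aut0_fix1_inv f two_le_k h_def by simp
  have ha: "h \<in> Aut0_set k" using h by (simp add: Aut0_fix1_def)
  have inverse: "compose (carrier (W n)) (aut_ext k n f') (aut_ext k n f'') = (\<lambda>x\<in>carrier (W n). x)"
    if "f' \<in> Aut0_fix1 k" "f'' \<in> Aut0_fix1 k" "f' \<otimes>\<^bsub>Aut0 k\<^esub> f'' = \<one>\<^bsub>Aut0 k\<^esub>" for f' f''
    using aut_ext_mult[OF two_le_k k_le_n that(1,2)] aut_ext_one that(3) by (simp add: Aut0_one)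
  have hf: "compose (carrier (W n)) (aut_ext k n h) (aut_ext k n f) = (\<lambda>x\<in>carrier (W n). x)"
    and fh: "compose (carrier (W n)) (aut_ext k n f) (aut_ext k n h) = (\<lambda>x\<in>carrier (W n). x)"
    using inverse[OF h f] inverse[OF f h] fa by (simp_all add: h_def Aut0_carrier)
  show "aut_ext k n f \<in> auto (W n)"
  proof (rule auto_W_intro[OF aut_ext_hom[OF two_le_k k_le_n fa], of "aut_ext k n h"])
    show "aut_ext k n f \<in> extensional (carrier (W n))" by (simp add: aut_ext_def)
    show "aut_ext k n h \<in> carrier (W n) \<rightarrow> carrier (W n)"
      using hom_in_carrier[OF aut_ext_hom[OF two_le_k k_le_n ha]] by blast
    fix x assume "x \<in> carrier (W n)"
    then show "aut_ext k n h (aut_ext k n f x) = x" "aut_ext k n f (aut_ext k n h x) = x"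
      using fun_cong[OF hf, of x] fun_cong[OF fh, of x] by (simp_all add: compose_def)
  qed
  fix j assume j: "j \<in> {1..n}"
  show "\<exists>g\<in>carrier (W n). aut_ext k n f [j] = g \<otimes>\<^bsub>W n\<^esub> [j] \<otimes>\<^bsub>W n\<^esub> inv\<^bsub>W n\<^esub> g"
  proof (cases "j \<le> k")
    case True
    obtain g where g: "g \<in> carrier (W k)" "f [j] = g \<otimes>\<^bsub>W k\<^esub> [j] \<otimes>\<^bsub>W k\<^esub> inv\<^bsub>W k\<^esub> g"
      using fa j True by (auto elim: Aut0_setE)
    then have "g \<in> carrier (W n)" using W_carrier_mono[OF k_le_n] by auto
    then show ?thesis
      using g True j by (auto simp: aut_ext_gen[OF two_le_k k_le_n fa] ext_img_def W_mult W_inv)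
  next
    case False
    have "1 \<le> n" using two_le_k k_le_n by simp
    then show ?thesis
      using False a1_pow_in_carrier[of n "twist f"] a1_pow_inv[of n "twist f"]
      by (intro bexI[of _ "a1_pow (twist f)"]) (simp_all add: aut_ext_gen[OF two_le_k k_le_n fa j] ext_img_def)
  qed
qed

lemma aut_ext_Aut0_mult:
  "f \<in> Aut0_fix1 k \<Longrightarrow> h \<in> Aut0_fix1 k \<Longrightarrow>
     aut_ext k n (f \<otimes>\<^bsub>Aut0 k\<^esub> h) = aut_ext k n f \<otimes>\<^bsub>Aut0 n\<^esub> aut_ext k n h"
  using aut_ext_mult[OF two_le_k k_le_n] aut_ext_in_Aut0_set by (simp add: Aut0_mult)

lemma aut_ext_conjW_a1: "aut_ext k n (conjW k [1]) = conjW n [1]"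
proof -
  have c: "conjW k [1] \<in> Aut0_set k"
    using conjW_a1_in_Aut0_fix1 two_le_k by (simp add: Aut0_fix1_def)
  have g1: "[1] \<in> carrier (W n)" using two_le_k k_le_n by (simp add: W_carrier)
  show ?thesis
  proof (rule W_endo_eqI[OF aut_ext_hom[OF two_le_k k_le_n c] conjW_hom[OF g1]])
    fix j assume j: "j \<in> {1..n}"
    have "aut_ext k n (conjW k [1]) [j] = ext_img k n (conjW k [1]) j"
      by (rule aut_ext_gen[OF two_le_k k_le_n c j])
    then show "aut_ext k n (conjW k [1]) [j] = conjW n [1] [j]"
      using j twist_conjW_a1[OF two_le_k] two_le_k
      by (auto simp: ext_img_def conjW_apply W_carrier W_inv W_mult a1_pow_def)
  qed (simp_all add: aut_ext_def conjW_def)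
qed

lemma aut_ext_Inn: "c \<in> Aut0_fix1 k \<Longrightarrow> c \<in> Inn k \<Longrightarrow> aut_ext k n c \<in> Inn n"
  using Aut0_fix1_Inn[of k c] two_le_k k_le_n aut_ext_one aut_ext_conjW_a1
    subgroup.one_closed[OF subgroup_Inn]
  by (auto simp: Inn_def W_carrier)

lemma out_ext_coset:
  assumes f: "f \<in> Aut0_fix1 k"
  shows "out_ext k n (r_coset (Aut0 k) (Inn k) f) = r_coset (Aut0 n) (Inn n) (aut_ext k n f)"
proof -
  interpret A: group "Aut0 k" by (rule group_Aut0)
  interpret An: group "Aut0 n" by (rule group_Aut0)
  define f' where "f' = (SOME f'. f' \<in> Aut0_fix1 k \<and> r_coset (Aut0 k) (Inn k) f = r_coset (Aut0 k) (Inn k) f')"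
  have f': "f' \<in> Aut0_fix1 k" "r_coset (Aut0 k) (Inn k) f = r_coset (Aut0 k) (Inn k) f'"
    using someI_ex[of "\<lambda>f'. f' \<in> Aut0_fix1 k \<and> r_coset (Aut0 k) (Inn k) f = r_coset (Aut0 k) (Inn k) f'"] f
    unfolding f'_def by blast+
  have fc: "f \<in> carrier (Aut0 k)" and fc': "f' \<in> carrier (Aut0 k)"
    using f f' by (auto simp: Aut0_fix1_def Aut0_carrier)
  define c where "c = f' \<otimes>\<^bsub>Aut0 k\<^esub> inv\<^bsub>Aut0 k\<^esub> f"
  have "f' \<in> r_coset (Aut0 k) (Inn k) f" using f'(2) A.rcos_self[OF fc' subgroup_Inn] by simp
  then have cI: "c \<in> Inn k"
    unfolding c_def using subgroup.rcos_module_imp[OF subgroup_Inn A.is_group fc] by simp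
  have cS: "c \<in> Aut0_fix1 k"
    unfolding c_def using Aut0_fix1_mult Aut0_fix1_inv f f' two_le_k by simp
  have "f' = c \<otimes>\<^bsub>Aut0 k\<^esub> f" unfolding c_def using fc fc' by (simp add: A.m_assoc)
  then have "aut_ext k n f' = aut_ext k n c \<otimes>\<^bsub>Aut0 n\<^esub> aut_ext k n f"
    using aut_ext_Aut0_mult[OF cS f] by simp
  moreover have "aut_ext k n f \<in> carrier (Aut0 n)"
    using aut_ext_in_Aut0_set[OF f] by (simp add: Aut0_carrier)
  ultimately show ?thesis
    using An.rcos_mult_absorb[OF subgroup_Inn aut_ext_Inn[OF cS cI]] by (simp add: out_ext_def f'_def)
qed

lemma out_ext_hom: "out_ext k n \<in> hom (Out0 k) (Out0 n)"
proof (rule homI)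
  have one_le_k: "1 \<le> k" using two_le_k by simp
  fix C assume "C \<in> carrier (Out0 k)"
  with one_le_k obtain f where f: "f \<in> Aut0_fix1 k" "C = r_coset (Aut0 k) (Inn k) f"
    by (rule Out0_fix1_representative)
  then show "out_ext k n C \<in> carrier (Out0 n)"
    using out_ext_coset aut_ext_in_Aut0_set by (simp add: Out0_carrier)
next
  have one_le_k: "1 \<le> k" using two_le_k by simp
  fix C D assume C: "C \<in> carrier (Out0 k)" and D: "D \<in> carrier (Out0 k)"
  obtain f where f: "f \<in> Aut0_fix1 k" "C = r_coset (Aut0 k) (Inn k) f"
    using one_le_k C by (rule Out0_fix1_representative)
  obtain h where h: "h \<in> Aut0_fix1 k" "D = r_coset (Aut0 k) (Inn k) h"
    using one_le_k D by (rule Out0_fix1_representative)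
  have fa: "f \<in> Aut0_set k" "h \<in> Aut0_set k" using f h by (auto simp: Aut0_fix1_def)
  show "out_ext k n (C \<otimes>\<^bsub>Out0 k\<^esub> D) = out_ext k n C \<otimes>\<^bsub>Out0 n\<^esub> out_ext k n D"
    using f h fa Aut0_fix1_mult two_le_k
    by (simp add: Out0_mult out_ext_coset aut_ext_in_Aut0_set aut_ext_Aut0_mult)
qed

end

lemma Min_Diff_singleton: "i \<in> {1..k} \<Longrightarrow> 2 \<le> k \<Longrightarrow> Min ({1..k} - {i}) = (if i = 1 then 2 else (1::nat))"
  by (rule Min_eqI) auto

lemma gens_D:
  assumes "(i, D) \<in> gens k" "2 \<le> k"
  shows "i \<in> {1..k}" "D \<subseteq> {1..k}" "i \<notin> D" "1 \<notin> D" "2 \<in> D \<Longrightarrow> i \<noteq> 1"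
  using assms Min_Diff_singleton[of i k] by (auto simp: gens_def split: if_splits)

text \<open>Because the chosen generators avoid the least element of $[k] \setminus \{i\}$, they fix
  $a_1$ and have trivial twist, so the section can be evaluated on them directly.\<close>

lemma pconj_in_Aut0_fix1: "(i, D) \<in> gens k \<Longrightarrow> 2 \<le> k \<Longrightarrow> pconj k i D \<in> Aut0_fix1 k"
  using pconj_in_Aut0_set[of i k D] pconj_gen[of i k D 1] gens_D[of i D k]
  by (auto simp: Aut0_fix1_def pconj_img_def)

lemma twist_pconj:
  assumes "(i, D) \<in> gens k" "2 \<le> k"
  shows "\<not> twist (pconj k i D)"
proof -
  note gen = gens_D[OF assms]
  have "pconj k i D [2] = (if 2 \<in> D then [i] \<otimes>\<^bsub>W k\<^esub> [2] \<otimes>\<^bsub>W k\<^esub> inv\<^bsub>W k\<^esub> [i]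
      else [] \<otimes>\<^bsub>W k\<^esub> [2] \<otimes>\<^bsub>W k\<^esub> inv\<^bsub>W k\<^esub> [])"
    using gen assms(2) by (simp add: pconj_gen pconj_img_def W_inv W_carrier W_mult)
  then show ?thesis
    using gen assms(2) twist_eq[of k "[i]" "pconj k i D"] twist_eq[of k "[]" "pconj k i D"]
    by (auto simp: W_carrier split: if_splits)
qed

lemma aut_ext_pconj:
  assumes g: "(i, D) \<in> gens k" and k: "2 \<le> k" "k \<le> n"
  shows "aut_ext k n (pconj k i D) = pconj n i D"
proof -
  note gen = gens_D[OF g k(1)]
  have "ext_img k n (pconj k i D) j = pconj_img n i D j" if j: "j \<in> {1..n}" for j
    using j gen k twist_pconj[OF g k(1)] W_carrier_mono[OF k(2)] pconj_gen[of i k D j]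
    by (auto simp: ext_img_def pconj_img_def a1_pow_def W_mult)
  then show ?thesis unfolding aut_ext_def pconj_eq
    by (intro restrict_ext gen_prod_cong) (auto simp: W_carrier)
qed

lemma out_ext_Xc:
  "(i, D) \<in> gens k \<Longrightarrow> 2 \<le> k \<Longrightarrow> k \<le> n \<Longrightarrow> out_ext k n (Xc k i D) = Xc n i D"
  using out_ext_coset[of k n "pconj k i D"] pconj_in_Aut0_fix1 aut_ext_pconj by (simp add: Xc_def)

lemma out_proj_pconj:
  assumes k: "1 \<le> k" "k \<le> n" and i: "i \<in> {1..n}" and D: "D \<subseteq> {1..n}" "i \<notin> D"
  shows "out_proj k n (pconj n i D) =
    (if k < i \<or> D \<subseteq> {Suc k..n} \<or> Dc n i D \<subseteq> {Suc k..n} then \<one>\<^bsub>Out0 k\<^esub>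
     else Xc k i (D - {Suc k..n}))"
proof (cases "k < i")
  case True
  then show ?thesis
    using aut_proj_pconj[OF k(2) i D] Inn_coset_eq_one[of "\<one>\<^bsub>Aut0 k\<^esub>" k] subgroup.one_closed[OF subgroup_Inn]
    by (simp add: out_proj_def Aut0_one)
next
  case False
  then have ik: "i \<in> {1..k}" using i by simp
  have proj: "out_proj k n (pconj n i D) = r_coset (Aut0 k) (Inn k) (pconj k i (D \<inter> {1..k}))"
    using aut_proj_pconj[OF k(2) i D] False by (simp add: out_proj_def)
  have low: "D - {Suc k..n} = D \<inter> {1..k}" using D by auto
  consider (empty) "D \<subseteq> {Suc k..n}" | (full) "Dc n i D \<subseteq> {Suc k..n}"
    | (proper) "\<not> D \<subseteq> {Suc k..n}" "\<not> Dc n i D \<subseteq> {Suc k..n}" by blast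
  then show ?thesis
  proof cases
    case empty
    then have "D \<inter> {1..k} = {}" by auto
    then show ?thesis
      using empty proj pconj_empty[OF ik] Inn_coset_eq_one[of "\<one>\<^bsub>Aut0 k\<^esub>" k] subgroup.one_closed[OF subgroup_Inn]
      by (simp add: Aut0_one)
  next
    case full
    have "x \<in> D" if x: "x \<in> {1..k}" "x \<noteq> i" for x
    proof (rule ccontr)
      assume "x \<notin> D"
      then have "x \<in> Dc n i D" using x k by (auto simp: Dc_def)
      then show False using full x by auto
    qed
    then have "D \<inter> {1..k} = {1..k} - {i}" using D ik by auto
    moreover have "conjW k [i] \<in> Inn k" using ik by (auto simp: Inn_def W_carrier)
    ultimately show ?thesis
      using full proj pconj_complement[OF ik] Inn_coset_eq_one[of "conjW k [i]" k] by simp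
  next
    case proper
    then show ?thesis using proj low False by (simp add: Xc_def)
  qed
qed

lemma induced_out_proj_out_ext:
  assumes k: "2 \<le> k" "k \<le> n"
    and \<phi>: "\<And>f. f \<in> Aut0_set n \<Longrightarrow> \<phi> (r_coset (Aut0 n) (Inn n) f) = out_proj k n f"
    and C: "C \<in> carrier (Out0 k)"
  shows "\<phi> (out_ext k n C) = C"
proof -
  have "1 \<le> k" using k by simp
  then obtain f where f: "f \<in> Aut0_fix1 k" "C = r_coset (Aut0 k) (Inn k) f"
    using C by (rule Out0_fix1_representative)
  then have fa: "f \<in> Aut0_set k" by (simp add: Aut0_fix1_def)
  have "\<phi> (out_ext k n C) = out_proj k n (aut_ext k n f)"
    using f out_ext_coset[OF k f(1)] \<phi> aut_ext_in_Aut0_set[OF k] by simp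
  also have "\<dots> = C"
    using f aut_proj_aut_ext[OF k fa] by (simp add: out_proj_def)
  finally show ?thesis .
qed

lemma induced_out_proj_Xc:
  assumes k: "1 \<le> k" "k \<le> n"
    and \<phi>: "\<And>f. f \<in> Aut0_set n \<Longrightarrow> \<phi> (r_coset (Aut0 n) (Inn n) f) = out_proj k n f"
    and g: "(i, D) \<in> gens n"
  shows "\<phi> (Xc n i D) =
    (if k < i \<or> D \<subseteq> {Suc k..n} \<or> Dc n i D \<subseteq> {Suc k..n} then \<one>\<^bsub>Out0 k\<^esub>
     else Xc k i (D - {Suc k..n}))"
proof -
  have i: "i \<in> {1..n}" and D: "D \<subseteq> {1..n}" "i \<notin> D" using g by (auto simp: gens_def)
  show ?thesis using \<phi>[OF pconj_in_Aut0_set[OF i D]] out_proj_pconj[OF k i D] by (simp add: Xc_def)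
qed

theorem mainTheorem5:
  fixes n :: nat
  assumes "n \<ge> 4"
  defines "F \<equiv> {5..n}"
  shows "\<exists>\<phi> \<psi>.
     \<phi> \<in> hom (Out0 n) (Out0 4)
   \<and> \<phi> ` carrier (Out0 n) = carrier (Out0 4)
   \<and> (\<forall>(i, D) \<in> gens n. \<phi> (Xc n i D) =
         (if i \<ge> 5 \<or> D \<subseteq> F \<or> Dc n i D \<subseteq> F then \<one>\<^bsub>Out0 4\<^esub> else Xc 4 i (D - F)))
   \<and> \<psi> \<in> hom (Out0 4) (Out0 n)
   \<and> (\<forall>(i, D) \<in> gens 4. \<psi> (Xc 4 i D) = Xc n i D)
   \<and> (\<forall>y \<in> carrier (Out0 4). \<phi> (\<psi> y) = y)
   \<and> kernel (Out0 n) (Out0 4) \<phi> \<lhd> Out0 n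
   \<and> subgroup (\<psi> ` carrier (Out0 4)) (Out0 n)
   \<and> kernel (Out0 n) (Out0 4) \<phi> \<inter> \<psi> ` carrier (Out0 4) = {\<one>\<^bsub>Out0 n\<^esub>}
   \<and> kernel (Out0 n) (Out0 4) \<phi> <#>\<^bsub>Out0 n\<^esub> \<psi> ` carrier (Out0 4) = carrier (Out0 n)
   \<and> inj_on \<psi> (carrier (Out0 4))
   \<and> \<psi> \<in> iso (Out0 4) ((Out0 n)\<lparr>carrier := \<psi> ` carrier (Out0 4)\<rparr>)"
proof -
  have k: "2 \<le> (4::nat)" "4 \<le> n" using assms(1) by simp_all
  obtain \<phi> where \<phi>: "\<phi> \<in> hom (Out0 n) (Out0 4)"
    and \<phi>_coset: "\<And>f. f \<in> Aut0_set n \<Longrightarrow> \<phi> (r_coset (Aut0 n) (Inn n) f) = out_proj 4 n f"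
    by (rule Out0_hom_induced[OF k(2)]) blast
  define \<psi> where "\<psi> = out_ext 4 n"
  have \<psi>: "\<psi> \<in> hom (Out0 4) (Out0 n)" unfolding \<psi>_def by (rule out_ext_hom[OF k])
  have retr: "\<And>y. y \<in> carrier (Out0 4) \<Longrightarrow> \<phi> (\<psi> y) = y"
    using induced_out_proj_out_ext[OF k \<phi>_coset] by (simp add: \<psi>_def)
  have \<phi>_gens: "\<forall>(i, D) \<in> gens n. \<phi> (Xc n i D) =
         (if i \<ge> 5 \<or> D \<subseteq> F \<or> Dc n i D \<subseteq> F then \<one>\<^bsub>Out0 4\<^esub> else Xc 4 i (D - F))"
  proof (clarify)
    fix i D assume "(i, D) \<in> gens n"
    moreover have "{Suc 4..n} = F" "(5 \<le> i) = (4 < i)" by (auto simp: F_def)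
    ultimately show "\<phi> (Xc n i D) =
        (if i \<ge> 5 \<or> D \<subseteq> F \<or> Dc n i D \<subseteq> F then \<one>\<^bsub>Out0 4\<^esub> else Xc 4 i (D - F))"
      using induced_out_proj_Xc[OF _ k(2) \<phi>_coset] by simp
  qed
  have \<psi>_gens: "\<forall>(i, D) \<in> gens 4. \<psi> (Xc 4 i D) = Xc n i D"
    using out_ext_Xc[OF _ k] by (auto simp: \<psi>_def)
  have homs: "group_hom (Out0 n) (Out0 4) \<phi>" "group_hom (Out0 4) (Out0 n) \<psi>"
    using \<phi> \<psi> group_Out0 by (simp_all add: group_hom_def group_hom_axioms_def)
  show ?thesis
    by (intro exI[of _ \<phi>] exI[of _ \<psi>] conjI \<phi> \<psi> \<phi>_gens \<psi>_gens ballI[OF retr]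
        group_hom.normal_kernel[OF homs(1)] group_hom.img_is_subgroup[OF homs(2)]
        retraction_surj[OF homs retr] section_inj_on[OF homs retr] kernel_Int_section_image[OF homs retr]
        kernel_set_mult_section_image[OF homs retr] section_iso_image[OF homs retr])
qed

end
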